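(* Let $f_1,\dots,f_h$ ($h\ge 2$) be germs of biholomorphisms of $\mathbb{C}^n$ fixing the origin such that the linear parts $\Lambda_1,\Lambda_2$ of $f_1,f_2$ are almost simultaneously Jordanizable and have no common resonances, i.e. $\mathrm{Res}_j(\Lambda_1)\cap\mathrm{Res}_j(\Lambda_2)=\emptyset$ for $j=1,\dots,n$. If $f_1$ and $f_2$ commute with $f_k$ for every $k=1,\dots,h$, then $f_1,\dots,f_h$ are simultaneously formally linearizable.
   Context: Matrices $M_1,M_2$ are almost simultaneously Jordanizable if there is an invertible $A$ such that each $A^{-1}M_kA$ is lower triangular with diagonal entries $\lambda_{k,1},\dots,\lambda_{k,n}$, entries $\varepsilon_{k,j}$ in position $(j+1,j)$, zeros elsewhere, and $\varepsilon_{k,j}\ne0\Rightarrow\lambda_{k,j}=\lambda_{k,j+1}$. In that basis $\Lambda_k$ denotes the tuple $(\lambda_{k,1},\dots,\lambda_{k,n})$ and $\mathrm{Res}_j(\Lambda_k)=\{Q\in\mathbb{N}^n:|Q|\ge2,\ \prod_i\lambda_{k,i}^{q_i}=\lambda_{k,j}\}$. Simultaneously formally linearizable means there is an invertible formal power series map $\varphi$, $\varphi(0)=0$, with $\varphi^{-1}\circ f_k\circ\varphi$ linear for all $k$. *)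

theory Defs
  imports Complex_Main "Jordan_Normal_Form.Matrix"
begin

text \<open>Coordinates of C^n are indexed by 0..n-1. A multi-index is a function
  Q :: nat => nat vanishing outside {0..<n}. A formal power series map of C^n (fixing or not
  the origin) is F :: nat => (nat => nat) => complex, where F i Q is the coefficient of z^Q
  in the i-th component (only i < n and Q in multi_idx n are relevant). A germ of
  holomorphic map at 0 is identified with its (convergent) Taylor series.\<close>

definition multi_idx :: "nat \<Rightarrow> (nat \<Rightarrow> nat) set" where
  "multi_idx n = {Q. \<forall>i. n \<le> i \<longrightarrow> Q i = 0}"

definition mdeg :: "nat \<Rightarrow> (nat \<Rightarrow> nat) \<Rightarrow> nat" where
  "mdeg n Q = (\<Sum>i<n. Q i)"

definition unit_idx :: "nat \<Rightarrow> nat \<Rightarrow> nat" where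
  "unit_idx j = (\<lambda>i. if i = j then 1 else 0)"

type_synonym fps_n = "(nat \<Rightarrow> nat) \<Rightarrow> complex"
type_synonym fmap = "nat \<Rightarrow> fps_n"

definition ps_one :: fps_n where
  "ps_one Q = (if (\<forall>i. Q i = 0) then 1 else 0)"

definition ps_mult :: "fps_n \<Rightarrow> fps_n \<Rightarrow> fps_n" where
  "ps_mult a b Q = (\<Sum>P\<in>{P. \<forall>i. P i \<le> Q i}. a P * b (\<lambda>i. Q i - P i))"

definition ps_pow :: "fps_n \<Rightarrow> nat \<Rightarrow> fps_n" where
  "ps_pow a k = ((ps_mult a) ^^ k) ps_one"

fun ps_prodpow :: "fmap \<Rightarrow> (nat \<Rightarrow> nat) \<Rightarrow> nat \<Rightarrow> fps_n" where
  "ps_prodpow G P 0 = ps_one"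
| "ps_prodpow G P (Suc m) = ps_mult (ps_prodpow G P m) (ps_pow (G m) (P m))"

text \<open>Formal composition F o G (meaningful when G has no constant term).\<close>
definition fcomp :: "nat \<Rightarrow> fmap \<Rightarrow> fmap \<Rightarrow> fmap" where
  "fcomp n F G i Q =
     (\<Sum>P\<in>{P\<in>multi_idx n. mdeg n P \<le> mdeg n Q}. F i P * ps_prodpow G P n Q)"

definition fmap_eq :: "nat \<Rightarrow> fmap \<Rightarrow> fmap \<Rightarrow> bool" where
  "fmap_eq n F G \<longleftrightarrow> (\<forall>i<n. \<forall>Q\<in>multi_idx n. F i Q = G i Q)"

definition fid :: fmap where
  "fid i Q = (if Q = unit_idx i then 1 else 0)"

definition fixes_origin :: "nat \<Rightarrow> fmap \<Rightarrow> bool" where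
  "fixes_origin n F \<longleftrightarrow> (\<forall>i<n. F i (\<lambda>_. 0) = 0)"

definition formal_inverse :: "nat \<Rightarrow> fmap \<Rightarrow> fmap \<Rightarrow> bool" where
  "formal_inverse n F G \<longleftrightarrow> fixes_origin n G \<and>
     fmap_eq n (fcomp n F G) fid \<and> fmap_eq n (fcomp n G F) fid"

text \<open>Convergent power series map (= germ of holomorphic map at 0).\<close>
definition convergent_map :: "nat \<Rightarrow> fmap \<Rightarrow> bool" where
  "convergent_map n F \<longleftrightarrow> (\<exists>r>0. \<forall>i<n.
     summable (\<lambda>d. \<Sum>Q\<in>{Q\<in>multi_idx n. mdeg n Q = d}. norm (F i Q) * r ^ d))"

definition biholo_germ :: "nat \<Rightarrow> fmap \<Rightarrow> bool" where
  "biholo_germ n F \<longleftrightarrow> convergent_map n F \<and> fixes_origin n F \<and>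
     (\<exists>G. convergent_map n G \<and> formal_inverse n F G)"

definition lin_part :: "nat \<Rightarrow> fmap \<Rightarrow> complex mat" where
  "lin_part n F = mat n n (\<lambda>(i,j). F i (unit_idx j))"

definition is_linear_map :: "nat \<Rightarrow> fmap \<Rightarrow> bool" where
  "is_linear_map n F \<longleftrightarrow> (\<forall>i<n. \<forall>Q\<in>multi_idx n. mdeg n Q \<noteq> 1 \<longrightarrow> F i Q = 0)"

definition simul_formally_linearizable :: "nat \<Rightarrow> nat set \<Rightarrow> (nat \<Rightarrow> fmap) \<Rightarrow> bool" where
  "simul_formally_linearizable n K f \<longleftrightarrow> (\<exists>\<phi> \<psi>. fixes_origin n \<phi> \<and> formal_inverse n \<phi> \<psi> \<and>
     (\<forall>k\<in>K. is_linear_map n (fcomp n \<psi> (fcomp n (f k) \<phi>))))"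

definition almost_jordan_form :: "nat \<Rightarrow> complex mat \<Rightarrow> bool" where
  "almost_jordan_form n T \<longleftrightarrow> (\<forall>i<n. \<forall>j<n.
     (i \<noteq> j \<and> i \<noteq> Suc j \<longrightarrow> T $$ (i,j) = 0) \<and>
     (i = Suc j \<and> T $$ (i,j) \<noteq> 0 \<longrightarrow> T $$ (j,j) = T $$ (i,i)))"

definition almost_simul_jordan_basis ::
  "nat \<Rightarrow> complex mat \<Rightarrow> complex mat \<Rightarrow> complex mat \<Rightarrow> complex mat \<Rightarrow> bool" where
  "almost_simul_jordan_basis n M1 M2 A B \<longleftrightarrow>
     A \<in> carrier_mat n n \<and> B \<in> carrier_mat n n \<and> A * B = 1\<^sub>m n \<and> B * A = 1\<^sub>m n \<and>
     almost_jordan_form n (B * M1 * A) \<and> almost_jordan_form n (B * M2 * A)"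

definition almost_simul_jordanizable :: "nat \<Rightarrow> complex mat \<Rightarrow> complex mat \<Rightarrow> bool" where
  "almost_simul_jordanizable n M1 M2 \<longleftrightarrow> (\<exists>A B. almost_simul_jordan_basis n M1 M2 A B)"

definition Res :: "nat \<Rightarrow> (nat \<Rightarrow> complex) \<Rightarrow> nat \<Rightarrow> (nat \<Rightarrow> nat) set" where
  "Res n lam j = {Q\<in>multi_idx n. 2 \<le> mdeg n Q \<and> (\<Prod>i<n. lam i ^ Q i) = lam j}"

end

theory Submission
  imports Defs
begin

(* A germ fixing 0 is handled through its formal Taylor coefficients, so the theorem is a
   statement about the composition algebra of formal power series maps of C^n.
   (1) The Cauchy product is a commutative monoid, substitution of series
       without constant term is additive and multiplicative, hence composition of maps is
       associative with the identity as unit; linear parts multiply as matrices.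
   (2) Order coefficient positions (j,Q) by degree, then by a weight for which
       lower triangular matrices act triangularly, then by j.  Along this order the Q-th
       coefficient of  g o phi - phi o T  depends on phi_j(Q) only through the factor
       lambda_j - lambda^Q ("homological equation"), so triangular systems can be solved
       recursively.  This gives formal inverses of tangent-to-identity maps.
   (3) If g1, g2 commute and their triangular linear parts T1, T2 have no common
       resonance, one phi satisfies g1 o phi = phi o T1 and g2 o phi = phi o T2.
   (4) Any map commuting with T1 and T2 is linear, so phi^-1 o g_k o phi is
       linear for every g_k commuting with g1 and g2.  The theorem follows after the linear
       change of coordinates putting Df1, Df2 into almost Jordan form. *)

definition box :: "(nat \<Rightarrow> nat) \<Rightarrow> (nat \<Rightarrow> nat) set" where
  "box Q = {P. \<forall>i. P i \<le> Q i}"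

definition finite_supp :: "(nat \<Rightarrow> nat) \<Rightarrow> bool" where
  "finite_supp Q \<longleftrightarrow> finite {i. Q i \<noteq> 0}"

text \<open>Series are functions on all of nat => nat; the ones produced by ps_mult vanish at
  multi-indices of infinite support (where the defining sum is an infinite sum, hence 0).\<close>
definition ps_regular :: "fps_n \<Rightarrow> bool" where
  "ps_regular a \<longleftrightarrow> (\<forall>Q. \<not> finite_supp Q \<longrightarrow> a Q = 0)"

definition zero_idx :: "nat \<Rightarrow> nat" where "zero_idx = (\<lambda>_. 0)"

lemma ps_mult_box: "ps_mult a b Q = (\<Sum>P\<in>box Q. a P * b (\<lambda>i. Q i - P i))"
  by (simp add: ps_mult_def box_def)

text \<open>Only finitely supported Q have a finite box; this is why ps_mult is meaningful exactly there.\<close>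
lemma finite_box: assumes "finite_supp Q" shows "finite (box Q)"
proof -
  let ?supp = "{i. Q i \<noteq> 0}"
  have fin_supp: "finite ?supp" using assms by (simp add: finite_supp_def)
  have sub: "(\<lambda>P. restrict P ?supp) ` box Q \<subseteq> PiE ?supp (\<lambda>i. {..Q i})"
    by (rule image_subsetI, subst restrict_PiE_iff) (auto simp: box_def)
  have fin: "finite (PiE ?supp (\<lambda>i. {..Q i}))" using fin_supp by (intro finite_PiE) auto
  have inj: "inj_on (\<lambda>P. restrict P ?supp) (box Q)"
  proof (rule inj_onI)
    fix P P' assume P: "P \<in> box Q" and P': "P' \<in> box Q"
      and eq: "restrict P ?supp = restrict P' ?supp"
    show "P = P'"
    proof
      fix i show "P i = P' i"
      proof (cases "Q i = 0")
        case True
        have "P i \<le> Q i" "P' i \<le> Q i" using P P' by (auto simp: box_def)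
        then show ?thesis using True by simp
      next
        case False
        have "restrict P ?supp i = restrict P' ?supp i" using eq by simp
        then show ?thesis using False by simp
      qed
    qed
  qed
  have "finite ((\<lambda>P. restrict P ?supp) ` box Q)" using finite_subset[OF sub fin] .
  then show ?thesis using finite_imageD[OF _ inj] by blast
qed

lemma infinite_box: assumes "\<not> finite_supp Q" shows "infinite (box Q)"
proof
  assume fin: "finite (box Q)"
  let ?supp = "{i. Q i \<noteq> 0}"
  let ?g = "\<lambda>i. (\<lambda>k. if k = i then Q i else 0)"
  have sub: "?g ` ?supp \<subseteq> box Q" by (auto simp: box_def)
  have inj: "inj_on ?g ?supp"
  proof (rule inj_onI)
    fix x y assume x: "x \<in> ?supp" and e: "?g x = ?g y"
    from fun_cong[OF e, of x] have "Q x = (if x = y then Q y else 0)" by simp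
    then show "x = y" using x by (auto split: if_splits)
  qed
  have "finite (?g ` ?supp)" using finite_subset[OF sub fin] .
  then have "finite ?supp" using finite_imageD[OF _ inj] by blast
  then show False using assms by (simp add: finite_supp_def)
qed

lemma multi_idx_finite_supp: "Q \<in> multi_idx n \<Longrightarrow> finite_supp Q"
  unfolding finite_supp_def multi_idx_def
  by (rule finite_subset[of _ "{..<n}"]) (auto simp: not_less[symmetric])

lemma box_multi_idx: "Q \<in> multi_idx n \<Longrightarrow> P \<in> box Q \<Longrightarrow> P \<in> multi_idx n"
  by (auto simp: multi_idx_def box_def) (metis le_zero_eq)

lemma diff_multi_idx: "Q \<in> multi_idx n \<Longrightarrow> (\<lambda>i. Q i - P i) \<in> multi_idx n"
  by (auto simp: multi_idx_def)

lemma add_multi_idx: "Q \<in> multi_idx n \<Longrightarrow> P \<in> multi_idx n \<Longrightarrow> (\<lambda>i. Q i + P i) \<in> multi_idx n"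
  by (auto simp: multi_idx_def)

lemma box_add: "P \<in> box Q \<Longrightarrow> (\<lambda>i. P i + (Q i - P i)) = Q"
  by (auto simp: box_def)

lemma zero_idx_multi_idx[simp]: "zero_idx \<in> multi_idx n" by (simp add: zero_idx_def multi_idx_def)

lemma unit_idx_multi_idx: "j < n \<Longrightarrow> unit_idx j \<in> multi_idx n"
  by (auto simp: unit_idx_def multi_idx_def)

lemma unit_idx_inj: "unit_idx i = unit_idx j \<longleftrightarrow> i = j"
  by (auto simp: unit_idx_def fun_eq_iff)

lemma unit_idx_neq_zero_idx[simp]: "unit_idx j \<noteq> zero_idx" "zero_idx \<noteq> unit_idx j"
  by (auto simp: unit_idx_def zero_idx_def fun_eq_iff)

section \<open>The multiplicative monoid of formal power series\<close>

text \<open>Commutativity: reflect the box at its centre P -> Q - P.\<close>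
lemma ps_mult_comm: "ps_mult a b = ps_mult b a"
proof
  fix Q
  show "ps_mult a b Q = ps_mult b a Q"
    unfolding ps_mult_box
    by (rule sum.reindex_bij_witness[of _ "\<lambda>P i. Q i - P i" "\<lambda>P i. Q i - P i"])
       (auto simp: box_def mult.commute)
qed

text \<open>Associativity: both sides are the sum over decompositions Q = P + S + (Q - P - S).\<close>
lemma ps_mult_assoc: "ps_mult (ps_mult a b) c = ps_mult a (ps_mult b c)"
proof
  fix Q
  show "ps_mult (ps_mult a b) c Q = ps_mult a (ps_mult b c) Q"
  proof (cases "finite_supp Q")
    case False
    then show ?thesis unfolding ps_mult_box using infinite_box by simp
  next
    case True
    have fin_box_below: "finite (box R)" if "R \<in> box Q" for R
    proof -
      have "{i. R i \<noteq> 0} \<subseteq> {i. Q i \<noteq> 0}" using that by (auto simp: box_def) (metis gr0I le_zero_eq)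
      then have "finite_supp R" using True finite_subset by (auto simp: finite_supp_def)
      then show "finite (box R)" by (rule finite_box)
    qed
    have fin_box_diff: "finite (box (\<lambda>i. Q i - P i))" for P
    proof -
      have "{i. Q i - P i \<noteq> 0} \<subseteq> {i. Q i \<noteq> 0}" by auto
      then have "finite_supp (\<lambda>i. Q i - P i)" using True finite_subset by (auto simp: finite_supp_def)
      then show ?thesis by (rule finite_box)
    qed
    have "ps_mult (ps_mult a b) c Q =
      (\<Sum>(R,P)\<in>Sigma (box Q) box. a P * b (\<lambda>i. R i - P i) * c (\<lambda>i. Q i - R i))"
      unfolding ps_mult_box
      by (subst sum.Sigma[symmetric]) (auto simp: finite_box True fin_box_below sum_distrib_right)
    also have "\<dots> = (\<Sum>(P,S)\<in>Sigma (box Q) (\<lambda>P. box (\<lambda>i. Q i - P i)).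
                      a P * (b S * c (\<lambda>i. Q i - P i - S i)))"
      by (rule sum.reindex_bij_witness[of _ "\<lambda>(P,S). (\<lambda>i. P i + S i, P)" "\<lambda>(R,P). (P, \<lambda>i. R i - P i)"])
         (auto simp: box_def le_diff_conv2 add.commute intro: diff_le_mono, metis le_trans)
    also have "\<dots> = ps_mult a (ps_mult b c) Q"
      unfolding ps_mult_box
      by (subst sum.Sigma[symmetric]) (auto simp: finite_box True fin_box_diff sum_distrib_left)
    finally show ?thesis .
  qed
qed

interpretation psm: abel_semigroup ps_mult
  by unfold_locales (rule ps_mult_assoc, rule ps_mult_comm)

text \<open>ps_one is a unit for products of regular series (and always at finitely supported Q).\<close>
lemma ps_one_eq: "ps_one Q = (if Q = zero_idx then 1 else 0)"
  by (auto simp: ps_one_def zero_idx_def)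

lemma ps_mult_one_finite_supp: assumes "finite_supp Q" shows "ps_mult a ps_one Q = a Q"
proof -
  have "ps_mult a ps_one Q = (\<Sum>P\<in>box Q. if P = Q then a P else 0)"
    unfolding ps_mult_box
    apply (rule sum.cong, simp)
    apply (auto simp: ps_one_eq zero_idx_def box_def fun_eq_iff)
    by (metis diff_is_0_eq le_antisym)
  also have "\<dots> = a Q" using finite_box[OF assms] by (subst sum.delta) (auto simp: box_def)
  finally show ?thesis .
qed

lemma ps_regular_mult: "ps_regular (ps_mult a b)"
  unfolding ps_regular_def ps_mult_box using infinite_box by simp

lemma ps_regular_one: "ps_regular ps_one"
  unfolding ps_regular_def ps_one_eq by (auto simp: finite_supp_def zero_idx_def)

lemma ps_mult_one: "ps_regular a \<Longrightarrow> ps_mult a ps_one = a"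
  by (rule ext) (metis ps_regular_def ps_mult_box ps_mult_one_finite_supp infinite_box sum.infinite)

lemma ps_one_mult: "ps_regular a \<Longrightarrow> ps_mult ps_one a = a"
  using ps_mult_one ps_mult_comm by metis

lemma ps_pow_0[simp]: "ps_pow a 0 = ps_one" by (simp add: ps_pow_def)
lemma ps_pow_Suc: "ps_pow a (Suc k) = ps_mult a (ps_pow a k)" by (simp add: ps_pow_def)

lemma ps_regular_pow: "ps_regular (ps_pow a k)"
  by (cases k) (auto simp: ps_pow_Suc ps_regular_one ps_regular_mult)

lemma ps_pow_add: "ps_pow a (k1 + k2) = ps_mult (ps_pow a k1) (ps_pow a k2)"
  by (induction k1) (auto simp: ps_pow_Suc ps_one_mult ps_regular_pow psm.assoc)

text \<open>The monomial substitution G^(P+R) = G^P G^R; this is what makes substitution multiplicative.\<close>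
lemma prodpow_add:
  "ps_prodpow G (\<lambda>i. P i + R i) N = ps_mult (ps_prodpow G P N) (ps_prodpow G R N)"
  by (induction N) (auto simp: ps_pow_add ps_one_mult ps_regular_one psm.assoc psm.left_commute)

lemma ps_mult_cong:
  assumes "Q \<in> multi_idx n" "\<forall>R\<in>multi_idx n. a R = a' R" "\<forall>R\<in>multi_idx n. b R = b' R"
  shows "ps_mult a b Q = ps_mult a' b' Q"
  unfolding ps_mult_box using assms box_multi_idx diff_multi_idx by (intro sum.cong) auto

lemma ps_mult_one_multi_idx: "Q \<in> multi_idx n \<Longrightarrow> ps_mult a ps_one Q = a Q"
  using ps_mult_one_finite_supp multi_idx_finite_supp by blast

lemma ps_one_mult_multi_idx: "Q \<in> multi_idx n \<Longrightarrow> ps_mult ps_one a Q = a Q"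
  using ps_mult_one_multi_idx ps_mult_comm by metis

section \<open>Degree, order and truncated agreement\<close>

definition idx_upto :: "nat \<Rightarrow> nat \<Rightarrow> (nat \<Rightarrow> nat) set" where
  "idx_upto n d = {P\<in>multi_idx n. mdeg n P \<le> d}"

text \<open>idx_upto n d lies in a finite box.\<close>
lemma finite_idx_upto: "finite (idx_upto n d)"
proof -
  have "idx_upto n d \<subseteq> box (\<lambda>i. if i < n then d else 0)"
  proof
    fix P assume P: "P \<in> idx_upto n d"
    show "P \<in> box (\<lambda>i. if i < n then d else 0)"
      unfolding box_def
    proof (intro CollectI allI)
      fix i
      show "P i \<le> (if i < n then d else 0)"
      proof (cases "i < n")
        case True
        have "P i \<le> (\<Sum>j<n. P j)" using True by (intro member_le_sum) auto
        then show ?thesis using P True by (auto simp: idx_upto_def mdeg_def)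
      next
        case False then show ?thesis using P by (auto simp: idx_upto_def multi_idx_def)
      qed
    qed
  qed
  moreover have "finite_supp (\<lambda>i. if i < n then d else 0)"
    unfolding finite_supp_def by (rule finite_subset[of _ "{..<n}"]) auto
  ultimately show ?thesis using finite_box finite_subset by blast
qed

lemma mdeg_add: "mdeg n (\<lambda>i. P i + R i) = mdeg n P + mdeg n R"
  by (simp add: mdeg_def sum.distrib)

lemma mdeg_box: "P \<in> box Q \<Longrightarrow> mdeg n Q = mdeg n P + mdeg n (\<lambda>i. Q i - P i)"
  unfolding mdeg_def by (subst sum.distrib[symmetric]) (auto simp: box_def intro!: sum.cong)

lemma mdeg_zero_idx[simp]: "mdeg n zero_idx = 0" by (simp add: zero_idx_def mdeg_def)

lemma mdeg_eq_0_iff: assumes "P \<in> multi_idx n" shows "mdeg n P = 0 \<longleftrightarrow> P = zero_idx"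
proof
  assume "mdeg n P = 0"
  then have a: "\<forall>i<n. P i = 0" by (simp add: mdeg_def)
  show "P = zero_idx"
  proof
    fix i show "P i = zero_idx i"
      using a assms by (cases "i < n") (auto simp: zero_idx_def multi_idx_def)
  qed
qed simp

lemma idx_upto_0: "idx_upto n 0 = {zero_idx}"
  using mdeg_eq_0_iff by (auto simp: idx_upto_def)

lemma mdeg_unit_idx: "j < n \<Longrightarrow> mdeg n (unit_idx j) = 1"
  by (simp add: mdeg_def unit_idx_def)

lemma mdeg_eq_1: assumes "P \<in> multi_idx n" "mdeg n P = 1" shows "\<exists>j<n. P = unit_idx j"
proof -
  have "(\<Sum>i<n. P i) = 1" using assms by (simp add: mdeg_def)
  then obtain j where j: "j < n" "P j \<noteq> 0" by (metis lessThan_iff one_neq_zero sum.neutral)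
  have "P j + (\<Sum>i\<in>{..<n}-{j}. P i) = 1" using \<open>(\<Sum>i<n. P i) = 1\<close> j
    by (metis finite_lessThan lessThan_iff sum.remove)
  then have Pj: "P j = 1" and rest: "(\<Sum>i\<in>{..<n}-{j}. P i) = 0" using j(2) by arith+
  have "\<forall>i. P i = unit_idx j i"
  proof
    fix i show "P i = unit_idx j i"
    proof (cases "i = j")
      case True then show ?thesis using Pj by (simp add: unit_idx_def)
    next
      case False
      show ?thesis
      proof (cases "i < n")
        case True then show ?thesis using rest False by (simp add: unit_idx_def)
      next
        case False then show ?thesis using assms(1) \<open>i \<noteq> j\<close> by (simp add: unit_idx_def multi_idx_def)
      qed
    qed
  qed
  then show ?thesis using j by blast
qed

definition ord_ge :: "nat \<Rightarrow> nat \<Rightarrow> fps_n \<Rightarrow> bool" where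
  "ord_ge n p a \<longleftrightarrow> (\<forall>Q\<in>multi_idx n. mdeg n Q < p \<longrightarrow> a Q = 0)"

definition agree_upto :: "nat \<Rightarrow> nat \<Rightarrow> fps_n \<Rightarrow> fps_n \<Rightarrow> bool" where
  "agree_upto n e a b \<longleftrightarrow> (\<forall>Q\<in>multi_idx n. mdeg n Q \<le> e \<longrightarrow> a Q = b Q)"

lemma ord_ge_mult:
  assumes "ord_ge n p a" "ord_ge n q b" shows "ord_ge n (p + q) (ps_mult a b)"
  unfolding ord_ge_def
proof (intro ballI impI)
  fix Q assume Q: "Q \<in> multi_idx n" and d: "mdeg n Q < p + q"
  show "ps_mult a b Q = 0" unfolding ps_mult_box
  proof (rule sum.neutral, intro ballI)
    fix P assume P: "P \<in> box Q"
    have "mdeg n Q = mdeg n P + mdeg n (\<lambda>i. Q i - P i)" using P by (rule mdeg_box)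
    then have "mdeg n P < p \<or> mdeg n (\<lambda>i. Q i - P i) < q" using d by linarith
    then show "a P * b (\<lambda>i. Q i - P i) = 0"
      using assms P Q box_multi_idx diff_multi_idx unfolding ord_ge_def by auto
  qed
qed

lemma agree_upto_mult:
  assumes "agree_upto n e1 a a'" "agree_upto n e2 b b'" "ord_ge n p a" "ord_ge n p a'" "ord_ge n q b" "ord_ge n q b'"
  shows "agree_upto n (min (e1 + q) (e2 + p)) (ps_mult a b) (ps_mult a' b')"
  unfolding agree_upto_def
proof (intro ballI impI)
  fix Q assume Q: "Q \<in> multi_idx n" and d: "mdeg n Q \<le> min (e1 + q) (e2 + p)"
  show "ps_mult a b Q = ps_mult a' b' Q" unfolding ps_mult_box
  proof (rule sum.cong[OF refl])
    fix P assume P: "P \<in> box Q"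
    have PM: "P \<in> multi_idx n" using box_multi_idx[OF Q P] .
    have RM: "(\<lambda>i. Q i - P i) \<in> multi_idx n" using diff_multi_idx[OF Q] .
    have dd: "mdeg n Q = mdeg n P + mdeg n (\<lambda>i. Q i - P i)" using P by (rule mdeg_box)
    show "a P * b (\<lambda>i. Q i - P i) = a' P * b' (\<lambda>i. Q i - P i)"
    proof (cases "mdeg n (\<lambda>i. Q i - P i) < q")
      case True then show ?thesis using assms(5,6) RM by (simp add: ord_ge_def)
    next
      case False
      then have e1: "a P = a' P" using assms(1) dd d PM by (auto simp: agree_upto_def)
      show ?thesis
      proof (cases "mdeg n P < p")
        case True then show ?thesis using assms(3,4) PM by (simp add: ord_ge_def)
      next
        case False
        then have "b (\<lambda>i. Q i - P i) = b' (\<lambda>i. Q i - P i)" using assms(2) dd d RM by (auto simp: agree_upto_def)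
        then show ?thesis using e1 by simp
      qed
    qed
  qed
qed

lemma ord_ge_ps_one: "ord_ge n 0 ps_one" by (simp add: ord_ge_def)

lemma ord_ge_pow: "ord_ge n 1 a \<Longrightarrow> ord_ge n k (ps_pow a k)"
proof (induction k)
  case 0 then show ?case by (simp add: ord_ge_ps_one)
next
  case (Suc k) then show ?case using ord_ge_mult[of n 1 a k] by (simp add: ps_pow_Suc)
qed

lemma ord_ge_prodpow: "(\<forall>m<N. ord_ge n 1 (G m)) \<Longrightarrow> ord_ge n (\<Sum>m<N. P m) (ps_prodpow G P N)"
proof (induction N)
  case 0 then show ?case by (simp add: ord_ge_ps_one)
next
  case (Suc N) then show ?case using ord_ge_mult ord_ge_pow by simp
qed

lemma ord_ge_prodpow_mdeg: "(\<forall>m<n. ord_ge n 1 (G m)) \<Longrightarrow> ord_ge n (mdeg n P) (ps_prodpow G P n)"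
  using ord_ge_prodpow[where N=n and G=G and P=P] by (simp add: mdeg_def)

lemma agree_upto_refl: "agree_upto n e a a" by (simp add: agree_upto_def)

lemma agree_upto_pow:
  assumes "ord_ge n 1 a" "ord_ge n 1 a'" "agree_upto n e a a'" "1 \<le> e"
  shows "agree_upto n (e - 1 + k) (ps_pow a k) (ps_pow a' k)"
proof (induction k)
  case 0 then show ?case by (simp add: agree_upto_refl)
next
  case (Suc k)
  have "agree_upto n (min (e + k) (e - 1 + k + 1)) (ps_mult a (ps_pow a k)) (ps_mult a' (ps_pow a' k))"
    by (rule agree_upto_mult[OF assms(3) Suc assms(1,2) ord_ge_pow[OF assms(1)] ord_ge_pow[OF assms(2)]])
  then show ?case using assms(4) by (simp add: ps_pow_Suc)
qed

lemma agree_upto_prodpow: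
  assumes "\<forall>m<N. ord_ge n 1 (G m) \<and> ord_ge n 1 (G' m) \<and> agree_upto n e (G m) (G' m)" "1 \<le> e"
  shows "agree_upto n (e - 1 + (\<Sum>m<N. P m)) (ps_prodpow G P N) (ps_prodpow G' P N)"
  using assms(1)
proof (induction N)
  case 0 then show ?case by (simp add: agree_upto_refl)
next
  case (Suc N)
  have h: "ord_ge n 1 (G N)" "ord_ge n 1 (G' N)" "agree_upto n e (G N) (G' N)" using Suc.prems by auto
  have IH: "agree_upto n (e - 1 + (\<Sum>m<N. P m)) (ps_prodpow G P N) (ps_prodpow G' P N)"
    using Suc by auto
  have "agree_upto n (min (e - 1 + (\<Sum>m<N. P m) + P N) (e - 1 + P N + (\<Sum>m<N. P m)))
     (ps_mult (ps_prodpow G P N) (ps_pow (G N) (P N))) (ps_mult (ps_prodpow G' P N) (ps_pow (G' N) (P N)))"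
    by (rule agree_upto_mult[OF IH agree_upto_pow[OF h assms(2)]])
       (use Suc.prems ord_ge_prodpow ord_ge_pow h in auto)
  then show ?case by (simp add: add.commute add.left_commute)
qed

lemma fixes_origin_iff: "fixes_origin n G \<longleftrightarrow> (\<forall>m<n. ord_ge n 1 (G m))"
  using mdeg_eq_0_iff by (auto simp: fixes_origin_def ord_ge_def zero_idx_def[symmetric])

section \<open>Substitution of series into a series\<close>

text \<open>ps_subst n G a is the series a(G_0, ..., G_{n-1}); when every G_m has no constant term
  only monomials of degree at most deg Q contribute to the coefficient at Q.\<close>
definition ps_subst :: "nat \<Rightarrow> fmap \<Rightarrow> fps_n \<Rightarrow> fps_n" where
  "ps_subst n G a Q = (\<Sum>P\<in>idx_upto n (mdeg n Q). a P * ps_prodpow G P n Q)"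

lemma fcomp_ps_subst: "fcomp n F G i = ps_subst n G (F i)"
  by (rule ext) (simp add: fcomp_def ps_subst_def idx_upto_def)

lemma fcomp_ps_subst_fun: "fcomp n G H = (\<lambda>m. ps_subst n H (G m))"
  by (rule ext) (simp add: fcomp_ps_subst)

lemma ps_pow_cong: "\<forall>R\<in>multi_idx n. a R = a' R \<Longrightarrow> \<forall>Q\<in>multi_idx n. ps_pow a k Q = ps_pow a' k Q"
  by (induction k) (auto simp: ps_pow_Suc intro: ps_mult_cong)

lemma prodpow_cong: "\<forall>m<N. \<forall>R\<in>multi_idx n. G m R = G' m R \<Longrightarrow>
   \<forall>Q\<in>multi_idx n. ps_prodpow G P N Q = ps_prodpow G' P N Q"
proof (induction N)
  case 0 then show ?case by simp
next
  case (Suc N)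
  have "\<forall>Q\<in>multi_idx n. ps_pow (G N) (P N) Q = ps_pow (G' N) (P N) Q"
    using Suc.prems by (intro ps_pow_cong) auto
  then show ?case using Suc by (auto intro: ps_mult_cong)
qed

lemma ps_subst_cong:
  assumes "\<forall>m<n. \<forall>R\<in>multi_idx n. G m R = G' m R" "\<forall>R\<in>multi_idx n. a R = a' R" "Q \<in> multi_idx n"
  shows "ps_subst n G a Q = ps_subst n G' a' Q"
  unfolding ps_subst_def using prodpow_cong[OF assms(1)] assms(2,3) by (intro sum.cong) (auto simp: idx_upto_def)

lemma fcomp_cong: "fmap_eq n F F' \<Longrightarrow> fmap_eq n G G' \<Longrightarrow> fmap_eq n (fcomp n F G) (fcomp n F' G')"
  unfolding fmap_eq_def fcomp_ps_subst using ps_subst_cong by auto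

lemma ps_subst_ext:
  assumes G: "fixes_origin n G" and Q: "Q \<in> multi_idx n" and d: "mdeg n Q \<le> d"
  shows "ps_subst n G a Q = (\<Sum>P\<in>idx_upto n d. a P * ps_prodpow G P n Q)"
  unfolding ps_subst_def
proof (rule sum.mono_neutral_left[OF finite_idx_upto])
  show "idx_upto n (mdeg n Q) \<subseteq> idx_upto n d" using d by (auto simp: idx_upto_def)
  show "\<forall>P\<in>idx_upto n d - idx_upto n (mdeg n Q). a P * ps_prodpow G P n Q = 0"
  proof
    fix P assume "P \<in> idx_upto n d - idx_upto n (mdeg n Q)"
    then have "mdeg n Q < mdeg n P" by (auto simp: idx_upto_def)
    then show "a P * ps_prodpow G P n Q = 0"
      using ord_ge_prodpow_mdeg[of n G P] G Q by (auto simp: ord_ge_def fixes_origin_iff)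
  qed
qed

lemma prodpow_zero_idx: "ps_prodpow G zero_idx N = ps_one"
  by (induction N) (auto simp: zero_idx_def ps_mult_one ps_regular_one)

lemma zero_idx_idx_upto[simp]: "zero_idx \<in> idx_upto n d" by (simp add: idx_upto_def)

lemma ps_subst_one: "ps_subst n H ps_one Q = ps_one Q"
proof -
  have "ps_subst n H ps_one Q = (\<Sum>P\<in>idx_upto n (mdeg n Q). if P = zero_idx then ps_prodpow H P n Q else 0)"
    unfolding ps_subst_def by (rule sum.cong) (auto simp: ps_one_eq)
  also have "\<dots> = ps_one Q" by (subst sum.delta[OF finite_idx_upto]) (simp add: prodpow_zero_idx)
  finally show ?thesis .
qed

lemma sum_idx_decompositions:
  "(\<Sum>(P,R)\<in>Sigma (idx_upto n d) box. F R (\<lambda>i. P i - R i)) =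
   (\<Sum>(R,T)\<in>{(R,T). R \<in> multi_idx n \<and> T \<in> multi_idx n \<and> mdeg n R + mdeg n T \<le> d}. F R T)"
proof (rule sum.reindex_bij_witness[of _ "\<lambda>(R,T). (\<lambda>k. R k + T k, R)" "\<lambda>(P,R). (R, \<lambda>k. P k - R k)"])
  fix x assume x: "x \<in> Sigma (idx_upto n d) box"
  obtain P R where xe: "x = (P,R)" by (cases x)
  have PD: "P \<in> idx_upto n d" and RP: "R \<in> box P" using x xe by auto
  have PM: "P \<in> multi_idx n" using PD by (simp add: idx_upto_def)
  show "(case case x of (P, R) \<Rightarrow> (R, \<lambda>k. P k - R k) of (R, T) \<Rightarrow> (\<lambda>k. R k + T k, R)) = x"
    using xe box_add[OF RP] by simp
  show "(case x of (P, R) \<Rightarrow> (R, \<lambda>k. P k - R k)) \<in>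
      {(R,T). R \<in> multi_idx n \<and> T \<in> multi_idx n \<and> mdeg n R + mdeg n T \<le> d}"
    using xe PM PD RP box_multi_idx[OF PM RP] diff_multi_idx[OF PM] mdeg_box[OF RP, of n]
    by (auto simp: idx_upto_def)
  show "(case case x of (P, R) \<Rightarrow> (R, \<lambda>k. P k - R k) of (R, T) \<Rightarrow> F R T) =
        (case x of (P, R) \<Rightarrow> F R (\<lambda>i. P i - R i))"
    using xe by simp
next
  fix y assume y: "y \<in> {(R,T). R \<in> multi_idx n \<and> T \<in> multi_idx n \<and> mdeg n R + mdeg n T \<le> d}"
  obtain R T where ye: "y = (R,T)" by (cases y)
  have RM: "R \<in> multi_idx n" and TM: "T \<in> multi_idx n" and dd: "mdeg n R + mdeg n T \<le> d"
    using y ye by auto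
  show "(case case y of (R, T) \<Rightarrow> (\<lambda>k. R k + T k, R) of (P, R) \<Rightarrow> (R, \<lambda>k. P k - R k)) = y"
    using ye by simp
  show "(case y of (R, T) \<Rightarrow> (\<lambda>k. R k + T k, R)) \<in> Sigma (idx_upto n d) box"
    using ye RM TM dd add_multi_idx[OF RM TM] mdeg_add[of n R T]
    by (auto simp: idx_upto_def box_def)
qed

text \<open>Substitution turns the Cauchy product into a sum over pairs of monomials (R, T),
  obtained by splitting every monomial P of a*b as P = R + T.\<close>
lemma ps_subst_mult_pairs:
  assumes G: "fixes_origin n G" and Q: "Q \<in> multi_idx n"
  defines "D \<equiv> idx_upto n (mdeg n Q)"
  shows "ps_subst n G (ps_mult a b) Q =
    (\<Sum>(R,T)\<in>D \<times> D. a R * b T * ps_mult (ps_prodpow G R n) (ps_prodpow G T n) Q)"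
proof -
  let ?g = "\<lambda>P. ps_prodpow G P n"
  define E where "E = {(R,T). R \<in> multi_idx n \<and> T \<in> multi_idx n \<and> mdeg n R + mdeg n T \<le> mdeg n Q}"
  have fD: "finite D" by (simp add: D_def finite_idx_upto)
  have fin_box: "\<And>P. P \<in> D \<Longrightarrow> finite (box P)"
    by (auto simp: D_def idx_upto_def intro: finite_box multi_idx_finite_supp)
  have split: "?g P = ps_mult (?g R) (?g (\<lambda>i. P i - R i))" if "R \<in> box P" for P R
    using box_add[OF that] prodpow_add[of G R "\<lambda>i. P i - R i" n] by simp
  have "ps_subst n G (ps_mult a b) Q =
      (\<Sum>P\<in>D. \<Sum>R\<in>box P. a R * b (\<lambda>i. P i - R i) * ps_mult (?g R) (?g (\<lambda>i. P i - R i)) Q)"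
    unfolding ps_subst_def D_def
    unfolding ps_mult_box[of a b] sum_distrib_right using split by (intro sum.cong) auto
  also have "\<dots> = (\<Sum>(P,R)\<in>Sigma D box. a R * b (\<lambda>i. P i - R i) * ps_mult (?g R) (?g (\<lambda>i. P i - R i)) Q)"
    by (rule sum.Sigma[OF fD]) (use fin_box in auto)
  also have "\<dots> = (\<Sum>(R,T)\<in>E. a R * b T * ps_mult (?g R) (?g T) Q)"
    unfolding D_def E_def by (rule sum_idx_decompositions)
  also have "\<dots> = (\<Sum>(R,T)\<in>D \<times> D. a R * b T * ps_mult (?g R) (?g T) Q)"
  proof (rule sum.mono_neutral_left)
    show "finite (D \<times> D)" using fD by simp
    show "E \<subseteq> D \<times> D" by (auto simp: E_def D_def idx_upto_def)
    show "\<forall>x\<in>D \<times> D - E. (case x of (R, T) \<Rightarrow> a R * b T * ps_mult (?g R) (?g T) Q) = 0"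
    proof
      fix x assume x: "x \<in> D \<times> D - E"
      obtain R T where xe: "x = (R,T)" by (cases x)
      have "mdeg n Q < mdeg n R + mdeg n T" using x xe by (auto simp: E_def D_def idx_upto_def)
      moreover have "ord_ge n (mdeg n R + mdeg n T) (ps_mult (?g R) (?g T))"
        using G by (intro ord_ge_mult ord_ge_prodpow_mdeg) (auto simp: fixes_origin_iff)
      ultimately have "ps_mult (?g R) (?g T) Q = 0" using Q by (auto simp: ord_ge_def)
      then show "(case x of (R, T) \<Rightarrow> a R * b T * ps_mult (?g R) (?g T) Q) = 0" using xe by simp
    qed
  qed
  finally show ?thesis .
qed

lemma ps_subst_mult:
  assumes G: "fixes_origin n G" and Q: "Q \<in> multi_idx n"
  shows "ps_subst n G (ps_mult a b) Q = ps_mult (ps_subst n G a) (ps_subst n G b) Q"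
proof -
  define D where "D = idx_upto n (mdeg n Q)"
  let ?g = "\<lambda>P. ps_prodpow G P n"
  have "ps_subst n G (ps_mult a b) Q = (\<Sum>R\<in>D. \<Sum>T\<in>D. a R * b T * ps_mult (?g R) (?g T) Q)"
    unfolding ps_subst_mult_pairs[OF G Q] D_def by (rule sum.cartesian_product[symmetric])
  also have "\<dots> = (\<Sum>R\<in>D. \<Sum>T\<in>D. \<Sum>Q1\<in>box Q. a R * b T * (?g R Q1 * ?g T (\<lambda>i. Q i - Q1 i)))"
    unfolding ps_mult_box sum_distrib_left by simp
  also have "\<dots> = (\<Sum>Q1\<in>box Q. \<Sum>R\<in>D. \<Sum>T\<in>D. a R * b T * (?g R Q1 * ?g T (\<lambda>i. Q i - Q1 i)))"
    by (simp only: sum.swap[of _ D "box Q"])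
  also have "\<dots> = (\<Sum>Q1\<in>box Q. (\<Sum>R\<in>D. a R * ?g R Q1) * (\<Sum>T\<in>D. b T * ?g T (\<lambda>i. Q i - Q1 i)))"
    by (simp add: sum_product mult_ac)
  also have "\<dots> = ps_mult (ps_subst n G a) (ps_subst n G b) Q"
    unfolding ps_mult_box
  proof (rule sum.cong[OF refl])
    fix Q1 assume Q1: "Q1 \<in> box Q"
    have deg: "mdeg n Q1 \<le> mdeg n Q" "mdeg n (\<lambda>i. Q i - Q1 i) \<le> mdeg n Q"
      using mdeg_box[OF Q1, of n] by auto
    show "(\<Sum>R\<in>D. a R * ?g R Q1) * (\<Sum>T\<in>D. b T * ?g T (\<lambda>i. Q i - Q1 i)) =
          ps_subst n G a Q1 * ps_subst n G b (\<lambda>i. Q i - Q1 i)"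
      using ps_subst_ext[OF G box_multi_idx[OF Q Q1] deg(1)] ps_subst_ext[OF G diff_multi_idx[OF Q] deg(2)]
      by (simp add: D_def)
  qed
  finally show ?thesis .
qed

lemma ps_subst_pow:
  assumes "fixes_origin n H"
  shows "\<forall>Q\<in>multi_idx n. ps_subst n H (ps_pow a k) Q = ps_pow (ps_subst n H a) k Q"
proof (induction k)
  case 0 show ?case by (simp add: ps_subst_one)
next
  case (Suc k)
  show ?case
  proof
    fix Q assume Q: "Q \<in> multi_idx n"
    have "ps_subst n H (ps_pow a (Suc k)) Q = ps_mult (ps_subst n H a) (ps_subst n H (ps_pow a k)) Q"
      by (simp add: ps_pow_Suc ps_subst_mult[OF assms Q])
    also have "\<dots> = ps_mult (ps_subst n H a) (ps_pow (ps_subst n H a) k) Q"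
      by (rule ps_mult_cong[OF Q]) (use Suc in auto)
    finally show "ps_subst n H (ps_pow a (Suc k)) Q = ps_pow (ps_subst n H a) (Suc k) Q" by (simp add: ps_pow_Suc)
  qed
qed

lemma ps_subst_prodpow:
  assumes "fixes_origin n H"
  shows "\<forall>Q\<in>multi_idx n. ps_subst n H (ps_prodpow G R N) Q = ps_prodpow (\<lambda>m. ps_subst n H (G m)) R N Q"
proof (induction N)
  case 0 show ?case by (simp add: ps_subst_one)
next
  case (Suc N)
  show ?case
  proof
    fix Q assume Q: "Q \<in> multi_idx n"
    have "ps_subst n H (ps_prodpow G R (Suc N)) Q =
       ps_mult (ps_subst n H (ps_prodpow G R N)) (ps_subst n H (ps_pow (G N) (R N))) Q"
      by (simp add: ps_subst_mult[OF assms Q])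
    also have "\<dots> = ps_mult (ps_prodpow (\<lambda>m. ps_subst n H (G m)) R N) (ps_pow (ps_subst n H (G N)) (R N)) Q"
      by (rule ps_mult_cong[OF Q]) (use Suc ps_subst_pow[OF assms] in auto)
    finally show "ps_subst n H (ps_prodpow G R (Suc N)) Q = ps_prodpow (\<lambda>m. ps_subst n H (G m)) R (Suc N) Q" by simp
  qed
qed

lemma fcomp_assoc:
  assumes G: "fixes_origin n G" and H: "fixes_origin n H"
  shows "fmap_eq n (fcomp n (fcomp n F G) H) (fcomp n F (fcomp n G H))"
  unfolding fmap_eq_def
proof (intro allI impI ballI)
  fix i Q assume Q: "Q \<in> multi_idx n"
  define D where "D = idx_upto n (mdeg n Q)"
  have "fcomp n (fcomp n F G) H i Q = ps_subst n H (ps_subst n G (F i)) Q" by (simp add: fcomp_ps_subst)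
  also have "\<dots> = (\<Sum>P\<in>D. (\<Sum>R\<in>D. F i R * ps_prodpow G R n P) * ps_prodpow H P n Q)"
    unfolding ps_subst_def[of n H] D_def[symmetric]
  proof (rule sum.cong[OF refl])
    fix P assume P: "P \<in> D"
    show "ps_subst n G (F i) P * ps_prodpow H P n Q = (\<Sum>R\<in>D. F i R * ps_prodpow G R n P) * ps_prodpow H P n Q"
      using ps_subst_ext[OF G, of P "mdeg n Q" "F i"] P by (simp add: D_def idx_upto_def)
  qed
  also have "\<dots> = (\<Sum>R\<in>D. F i R * (\<Sum>P\<in>D. ps_prodpow G R n P * ps_prodpow H P n Q))"
    unfolding sum_distrib_right sum_distrib_left mult.assoc by (rule sum.swap)
  also have "\<dots> = (\<Sum>R\<in>D. F i R * ps_subst n H (ps_prodpow G R n) Q)" by (simp add: ps_subst_def D_def)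
  also have "\<dots> = (\<Sum>R\<in>D. F i R * ps_prodpow (\<lambda>m. ps_subst n H (G m)) R n Q)"
    using ps_subst_prodpow[OF H] Q by simp
  also have "\<dots> = fcomp n F (fcomp n G H) i Q" by (simp add: fcomp_ps_subst fcomp_ps_subst_fun ps_subst_def D_def)
  finally show "fcomp n (fcomp n F G) H i Q = fcomp n F (fcomp n G H) i Q" .
qed

lemma fcomp_zero_idx: "fcomp n F G i zero_idx = F i zero_idx"
  by (simp add: fcomp_ps_subst ps_subst_def idx_upto_0 prodpow_zero_idx ps_one_eq)

lemma fixes_origin_fcomp: "fixes_origin n F \<Longrightarrow> fixes_origin n (fcomp n F G)"
  by (simp add: fixes_origin_def fcomp_zero_idx[unfolded zero_idx_def])

lemma fmap_eq_refl[simp]: "fmap_eq n F F" by (simp add: fmap_eq_def)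
lemma fmap_eq_sym: "fmap_eq n F G \<Longrightarrow> fmap_eq n G F" by (simp add: fmap_eq_def)
lemma fmap_eq_trans[trans]: "fmap_eq n F G \<Longrightarrow> fmap_eq n G H \<Longrightarrow> fmap_eq n F H"
  by (simp add: fmap_eq_def)

lemma fcomp_cong1: "fmap_eq n F F' \<Longrightarrow> fmap_eq n (fcomp n F G) (fcomp n F' G)"
  by (rule fcomp_cong) simp_all
lemma fcomp_cong2: "fmap_eq n G G' \<Longrightarrow> fmap_eq n (fcomp n F G) (fcomp n F G')"
  by (rule fcomp_cong) simp_all

lemma prodpow_unit_idx_upto:
  "\<forall>Q\<in>multi_idx n. ps_prodpow G (unit_idx m) N Q = (if m < N then G m Q else ps_one Q)"
proof (induction N)
  case 0 then show ?case by simp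
next
  case (Suc N)
  show ?case
  proof
    fix Q assume Q: "Q \<in> multi_idx n"
    show "ps_prodpow G (unit_idx m) (Suc N) Q = (if m < Suc N then G m Q else ps_one Q)"
    proof (cases "m = N")
      case True
      have "ps_prodpow G (unit_idx m) (Suc N) Q = ps_mult ps_one (ps_mult (G N) ps_one) Q"
        using Suc True by (simp add: unit_idx_def ps_pow_Suc) (rule ps_mult_cong[OF Q], auto)
      also have "\<dots> = G N Q" using Q ps_one_mult_multi_idx ps_mult_one_multi_idx ps_mult_cong
        by (metis (no_types, lifting))
      finally show ?thesis using True by simp
    next
      case False
      have "ps_prodpow G (unit_idx m) (Suc N) Q = ps_mult (ps_prodpow G (unit_idx m) N) ps_one Q"
        using False by (simp add: unit_idx_def)
      also have "\<dots> = ps_prodpow G (unit_idx m) N Q" by (rule ps_mult_one_multi_idx[OF Q])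
      finally show ?thesis using Suc Q False by auto
    qed
  qed
qed

lemma prodpow_unit_idx: "m < n \<Longrightarrow> Q \<in> multi_idx n \<Longrightarrow> ps_prodpow G (unit_idx m) n Q = G m Q"
  using prodpow_unit_idx_upto by simp

lemma fcomp_fid_left:
  assumes "fixes_origin n G" shows "fmap_eq n (fcomp n fid G) G"
  unfolding fmap_eq_def
proof (intro allI impI ballI)
  fix i Q assume i: "i < n" and Q: "Q \<in> multi_idx n"
  have "fcomp n fid G i Q = (\<Sum>P\<in>idx_upto n (mdeg n Q). if P = unit_idx i then ps_prodpow G P n Q else 0)"
    unfolding fcomp_ps_subst ps_subst_def by (rule sum.cong) (auto simp: fid_def)
  also have "\<dots> = (if unit_idx i \<in> idx_upto n (mdeg n Q) then G i Q else 0)"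
    by (subst sum.delta[OF finite_idx_upto]) (simp add: prodpow_unit_idx[OF i Q])
  also have "\<dots> = G i Q"
  proof (cases "mdeg n Q = 0")
    case True
    then have "Q = zero_idx" using mdeg_eq_0_iff Q by blast
    then show ?thesis using assms i by (auto simp: fixes_origin_def zero_idx_def)
  next
    case False then show ?thesis using i by (auto simp: idx_upto_def unit_idx_multi_idx mdeg_unit_idx)
  qed
  finally show "fcomp n fid G i Q = G i Q" .
qed

definition monomial :: "(nat \<Rightarrow> nat) \<Rightarrow> fps_n" where
  "monomial A Q = (if Q = A then 1 else 0)"

lemma monomial_mult: assumes "finite_supp Q" shows "ps_mult (monomial A) (monomial B) Q = monomial (\<lambda>i. A i + B i) Q"
proof -
  have "ps_mult (monomial A) (monomial B) Q = (\<Sum>P\<in>box Q. if P = A then monomial B (\<lambda>i. Q i - A i) else 0)"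
    unfolding ps_mult_box by (rule sum.cong) (auto simp: monomial_def)
  also have "\<dots> = (if A \<in> box Q then monomial B (\<lambda>i. Q i - A i) else 0)"
    by (rule sum.delta[OF finite_box[OF assms]])
  also have "\<dots> = monomial (\<lambda>i. A i + B i) Q"
    by (auto simp: monomial_def box_def fun_eq_iff) (metis le_add1 add_diff_cancel_left' le_add_diff_inverse)+
  finally show ?thesis .
qed

lemma ps_pow_monomial: "\<forall>Q\<in>multi_idx n. ps_pow (monomial A) k Q = monomial (\<lambda>i. k * A i) Q"
proof (induction k)
  case 0 then show ?case by (auto simp: ps_one_eq monomial_def zero_idx_def fun_eq_iff)
next
  case (Suc k)
  show ?case
  proof
    fix Q assume Q: "Q \<in> multi_idx n"
    have "ps_pow (monomial A) (Suc k) Q = ps_mult (monomial A) (monomial (\<lambda>i. k * A i)) Q"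
      unfolding ps_pow_Suc by (rule ps_mult_cong[OF Q]) (use Suc in auto)
    also have "\<dots> = monomial (\<lambda>i. Suc k * A i) Q" using monomial_mult[OF multi_idx_finite_supp[OF Q]] by simp
    finally show "ps_pow (monomial A) (Suc k) Q = monomial (\<lambda>i. Suc k * A i) Q" .
  qed
qed

lemma fid_monomial: "fid m = monomial (unit_idx m)"
  by (rule ext) (simp add: fid_def monomial_def)

lemma prodpow_fid: "\<forall>Q\<in>multi_idx n. ps_prodpow fid P N Q = monomial (\<lambda>i. if i < N then P i else 0) Q"
proof (induction N)
  case 0 then show ?case by (auto simp: ps_one_eq monomial_def zero_idx_def fun_eq_iff)
next
  case (Suc N)
  show ?case
  proof
    fix Q assume Q: "Q \<in> multi_idx n"
    have "ps_prodpow fid P (Suc N) Q =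
        ps_mult (monomial (\<lambda>i. if i < N then P i else 0)) (monomial (\<lambda>i. P N * unit_idx N i)) Q"
      unfolding ps_prodpow.simps
      by (rule ps_mult_cong[OF Q]) (use Suc ps_pow_monomial[of n "unit_idx N"] in \<open>auto simp: fid_monomial[symmetric]\<close>)
    also have "\<dots> = monomial (\<lambda>i. (if i < N then P i else 0) + P N * unit_idx N i) Q"
      by (rule monomial_mult[OF multi_idx_finite_supp[OF Q]])
    also have "(\<lambda>i. (if i < N then P i else 0) + P N * unit_idx N i) = (\<lambda>i. if i < Suc N then P i else 0)"
      by (auto simp: unit_idx_def fun_eq_iff less_Suc_eq)
    finally show "ps_prodpow fid P (Suc N) Q = monomial (\<lambda>i. if i < Suc N then P i else 0) Q" .
  qed
qed

lemma fcomp_fid_right: "fmap_eq n (fcomp n F fid) F"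
  unfolding fmap_eq_def
proof (intro allI impI ballI)
  fix i Q assume i: "i < n" and Q: "Q \<in> multi_idx n"
  have e: "\<And>P. P \<in> multi_idx n \<Longrightarrow> (\<lambda>j. if j < n then P j else 0) = P"
    by (auto simp: multi_idx_def fun_eq_iff)
  have "fcomp n F fid i Q = (\<Sum>P\<in>idx_upto n (mdeg n Q). if P = Q then F i P else 0)"
    unfolding fcomp_ps_subst ps_subst_def
    by (rule sum.cong) (use prodpow_fid Q e in \<open>auto simp: idx_upto_def monomial_def\<close>)
  also have "\<dots> = F i Q" by (subst sum.delta[OF finite_idx_upto]) (use Q in \<open>auto simp: idx_upto_def\<close>)
  finally show "fcomp n F fid i Q = F i Q" .
qed

definition linmap :: "nat \<Rightarrow> complex mat \<Rightarrow> fmap" where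
  "linmap n T i Q = (\<Sum>m<n. if Q = unit_idx m then T $$ (i,m) else 0)"

lemma linmap_unit: "j < n \<Longrightarrow> linmap n T i (unit_idx j) = T $$ (i,j)"
  unfolding linmap_def by (simp add: unit_idx_inj)

lemma linmap_nonunit: "(\<forall>m<n. Q \<noteq> unit_idx m) \<Longrightarrow> linmap n T i Q = 0"
  unfolding linmap_def by simp

lemma fixes_origin_linmap: "fixes_origin n (linmap n T)"
  unfolding fixes_origin_def using unit_idx_neq_zero_idx by (auto simp: linmap_def zero_idx_def[symmetric])

lemma fcomp_linmap_left:
  assumes G: "fixes_origin n G" and Q: "Q \<in> multi_idx n"
  shows "fcomp n (linmap n T) G i Q = (\<Sum>m<n. T $$ (i,m) * G m Q)"
proof -
  have "fcomp n (linmap n T) G i Q =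
      (\<Sum>P\<in>idx_upto n (mdeg n Q). \<Sum>m<n. if P = unit_idx m then T$$(i,m) * ps_prodpow G P n Q else 0)"
    unfolding fcomp_ps_subst ps_subst_def linmap_def sum_distrib_right by (intro sum.cong) auto
  also have "\<dots> = (\<Sum>m<n. \<Sum>P\<in>idx_upto n (mdeg n Q). if P = unit_idx m then T$$(i,m) * ps_prodpow G P n Q else 0)"
    by (rule sum.swap)
  also have "\<dots> = (\<Sum>m<n. if unit_idx m \<in> idx_upto n (mdeg n Q) then T$$(i,m) * G m Q else 0)"
    by (intro sum.cong refl, subst sum.delta[OF finite_idx_upto]) (simp add: prodpow_unit_idx Q)
  also have "\<dots> = (\<Sum>m<n. T $$ (i,m) * G m Q)"
  proof (cases "mdeg n Q = 0")
    case True
    then have "Q = zero_idx" using mdeg_eq_0_iff Q by blast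
    then have "\<forall>m<n. G m Q = 0" using G by (simp add: fixes_origin_def zero_idx_def)
    then show ?thesis by (intro sum.cong refl) auto
  next
    case False then show ?thesis
      by (intro sum.cong refl) (auto simp: idx_upto_def unit_idx_multi_idx mdeg_unit_idx)
  qed
  finally show ?thesis .
qed

lemma lin_part_linmap: "T \<in> carrier_mat n n \<Longrightarrow> lin_part n (linmap n T) = T"
  by (rule eq_matI) (auto simp: lin_part_def linmap_unit)

lemma idx_upto_1: "idx_upto n 1 = insert zero_idx (unit_idx ` {..<n})"
proof
  show "idx_upto n 1 \<subseteq> insert zero_idx (unit_idx ` {..<n})"
  proof
    fix P assume P: "P \<in> idx_upto n 1"
    then have PM: "P \<in> multi_idx n" and d: "mdeg n P \<le> 1" by (auto simp: idx_upto_def)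
    show "P \<in> insert zero_idx (unit_idx ` {..<n})"
    proof (cases "mdeg n P = 0")
      case True then show ?thesis using mdeg_eq_0_iff PM by blast
    next
      case False then have "mdeg n P = 1" using d by simp
      then show ?thesis using mdeg_eq_1 PM by blast
    qed
  qed
  show "insert zero_idx (unit_idx ` {..<n}) \<subseteq> idx_upto n 1"
    by (auto simp: idx_upto_def unit_idx_multi_idx mdeg_unit_idx)
qed

lemma fcomp_unit:
  assumes G: "fixes_origin n G" and j: "j < n"
  shows "fcomp n F G i (unit_idx j) = (\<Sum>m<n. F i (unit_idx m) * G m (unit_idx j))"
proof -
  have nz: "zero_idx \<notin> unit_idx ` {..<n}" using unit_idx_neq_zero_idx by (metis imageE)
  have inj: "inj_on unit_idx {..<n}" by (auto simp: inj_on_def unit_idx_inj)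
  have "fcomp n F G i (unit_idx j) = (\<Sum>P\<in>insert zero_idx (unit_idx ` {..<n}). F i P * ps_prodpow G P n (unit_idx j))"
    unfolding fcomp_ps_subst ps_subst_def mdeg_unit_idx[OF j] idx_upto_1 ..
  also have "\<dots> = (\<Sum>P\<in>unit_idx ` {..<n}. F i P * ps_prodpow G P n (unit_idx j))"
    using nz by (simp add: prodpow_zero_idx ps_one_eq)
  also have "\<dots> = (\<Sum>m<n. F i (unit_idx m) * G m (unit_idx j))"
    by (subst sum.reindex[OF inj]) (simp add: prodpow_unit_idx unit_idx_multi_idx j)
  finally show ?thesis .
qed

lemma lin_entry: "lin_part n g = T \<Longrightarrow> j < n \<Longrightarrow> m < n \<Longrightarrow> g j (unit_idx m) = T $$ (j,m)"
  unfolding lin_part_def by auto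

lemma lin_part_carrier: "lin_part n F \<in> carrier_mat n n"
  by (simp add: lin_part_def)

lemma lin_part_fcomp:
  assumes "fixes_origin n G" shows "lin_part n (fcomp n F G) = lin_part n F * lin_part n G"
  by (rule eq_matI) (auto simp: lin_part_def fcomp_unit[OF assms] scalar_prod_def atLeast0LessThan)

lemma lin_part_cong: "fmap_eq n F F' \<Longrightarrow> lin_part n F = lin_part n F'"
  by (rule eq_matI) (auto simp: lin_part_def fmap_eq_def unit_idx_multi_idx)

lemma linmap_comp:
  assumes T: "T \<in> carrier_mat n n" and U: "U \<in> carrier_mat n n"
  shows "fmap_eq n (fcomp n (linmap n T) (linmap n U)) (linmap n (T * U))"
  unfolding fmap_eq_def
proof (intro allI impI ballI)
  fix i Q assume i: "i < n" and Q: "Q \<in> multi_idx n"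
  have TU: "(T * U) $$ (i,l) = (\<Sum>m<n. T $$ (i,m) * U $$ (m,l))" if "l < n" for l
    using T U i that by (simp add: scalar_prod_def atLeast0LessThan)
  have "fcomp n (linmap n T) (linmap n U) i Q = (\<Sum>m<n. T $$ (i,m) * linmap n U m Q)"
    by (rule fcomp_linmap_left[OF fixes_origin_linmap Q])
  also have "\<dots> = (\<Sum>m<n. \<Sum>l<n. if Q = unit_idx l then T $$ (i,m) * U $$ (m,l) else 0)"
    unfolding linmap_def sum_distrib_left by (intro sum.cong) auto
  also have "\<dots> = (\<Sum>l<n. \<Sum>m<n. if Q = unit_idx l then T $$ (i,m) * U $$ (m,l) else 0)"
    by (rule sum.swap)
  also have "\<dots> = linmap n (T * U) i Q"
    unfolding linmap_def by (intro sum.cong refl) (auto simp: TU)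
  finally show "fcomp n (linmap n T) (linmap n U) i Q = linmap n (T * U) i Q" .
qed

lemma linmap_one: "fmap_eq n (linmap n (1\<^sub>m n)) fid"
  unfolding fmap_eq_def
proof (intro allI impI ballI)
  fix i Q assume i: "i < n" and Q: "Q \<in> multi_idx n"
  have "linmap n (1\<^sub>m n) i Q = (\<Sum>m<n. if m = i then (if Q = unit_idx m then 1 else 0) else 0)"
    unfolding linmap_def using i by (intro sum.cong) auto
  also have "\<dots> = fid i Q" using i by (simp add: fid_def)
  finally show "linmap n (1\<^sub>m n) i Q = fid i Q" .
qed

lemma linmap_inverse:
  assumes "A \<in> carrier_mat n n" "B \<in> carrier_mat n n" "A * B = 1\<^sub>m n"
  shows "fmap_eq n (fcomp n (linmap n A) (linmap n B)) fid"
proof -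
  have "fmap_eq n (linmap n (A * B)) fid" using linmap_one assms(3) by simp
  then show ?thesis using linmap_comp[OF assms(1,2)] fmap_eq_trans by blast
qed

lemma is_linear_map_cong: "fmap_eq n F G \<Longrightarrow> is_linear_map n G \<Longrightarrow> is_linear_map n F"
  by (auto simp: fmap_eq_def is_linear_map_def)

lemma ps_subst_add: "ps_subst n G (\<lambda>R. a R + b R) Q = ps_subst n G a Q + ps_subst n G b Q"
  unfolding ps_subst_def by (simp add: distrib_right sum.distrib)

lemma ps_subst_diff: "ps_subst n G (\<lambda>R. a R - b R) Q = ps_subst n G a Q - ps_subst n G b Q"
  unfolding ps_subst_def by (simp add: left_diff_distrib sum_subtractf)

lemma prodpow_perturb:
  assumes u: "\<forall>m<n. ord_ge n 1 (u m)" and r: "\<forall>m<n. ord_ge n d (r m)" and d: "2 \<le> d"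
    and Q: "Q \<in> multi_idx n" and dQ: "mdeg n Q \<le> d" and P: "P \<in> multi_idx n"
  shows "ps_prodpow (\<lambda>m R. u m R + r m R) P n Q - ps_prodpow u P n Q =
    (\<Sum>m<n. if P = unit_idx m then r m Q else 0)"
proof -
  define v where "v = (\<lambda>m R. u m R + r m R)"
  consider "mdeg n P = 0" | "mdeg n P = 1" | "2 \<le> mdeg n P" by linarith
  then show ?thesis
  proof cases
    case 1 then have "P = zero_idx" using mdeg_eq_0_iff P by blast
    then show ?thesis by (simp add: prodpow_zero_idx)
  next
    case 2 then obtain k where k: "k < n" "P = unit_idx k" using mdeg_eq_1 P by blast
    then show ?thesis using Q by (simp add: prodpow_unit_idx unit_idx_inj)
  next
    case 3
    have "\<forall>m<n. ord_ge n 1 (v m) \<and> ord_ge n 1 (u m) \<and> agree_upto n (d - 1) (v m) (u m)"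
      using u r d by (auto simp: v_def agree_upto_def ord_ge_def)
    then have "agree_upto n (d - 1 - 1 + (\<Sum>m<n. P m)) (ps_prodpow v P n) (ps_prodpow u P n)"
      using d by (intro agree_upto_prodpow) auto
    moreover have "mdeg n Q \<le> d - 1 - 1 + (\<Sum>m<n. P m)" using 3 dQ d by (simp add: mdeg_def)
    ultimately have "ps_prodpow v P n Q = ps_prodpow u P n Q" using Q by (simp add: agree_upto_def)
    moreover have "\<forall>m<n. P \<noteq> unit_idx m" using 3 mdeg_unit_idx by fastforce
    ultimately show ?thesis by (simp add: v_def)
  qed
qed

lemma ps_subst_perturb:
  assumes u: "\<forall>m<n. ord_ge n 1 (u m)" and r: "\<forall>m<n. ord_ge n d (r m)" and d: "2 \<le> d"
    and Q: "Q \<in> multi_idx n" and dQ: "mdeg n Q \<le> d"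
  shows "ps_subst n (\<lambda>m R. u m R + r m R) a Q - ps_subst n u a Q = (\<Sum>m<n. a (unit_idx m) * r m Q)"
proof -
  define D where "D = idx_upto n (mdeg n Q)"
  have "ps_subst n (\<lambda>m R. u m R + r m R) a Q - ps_subst n u a Q =
      (\<Sum>P\<in>D. a P * (ps_prodpow (\<lambda>m R. u m R + r m R) P n Q - ps_prodpow u P n Q))"
    unfolding ps_subst_def D_def by (simp add: right_diff_distrib sum_subtractf)
  also have "\<dots> = (\<Sum>P\<in>D. \<Sum>m<n. if P = unit_idx m then a P * r m Q else 0)"
    using prodpow_perturb[OF u r d Q dQ]
    by (simp add: D_def idx_upto_def sum_distrib_left if_distrib cong: if_cong)
  also have "\<dots> = (\<Sum>m<n. \<Sum>P\<in>D. if P = unit_idx m then a P * r m Q else 0)" by (rule sum.swap)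
  also have "\<dots> = (\<Sum>m<n. if unit_idx m \<in> D then a (unit_idx m) * r m Q else 0)"
    by (simp add: D_def sum.delta[OF finite_idx_upto])
  also have "\<dots> = (\<Sum>m<n. a (unit_idx m) * r m Q)"
  proof (cases "mdeg n Q = 0")
    case True
    then have "Q = zero_idx" using mdeg_eq_0_iff Q by blast
    then have "\<forall>m<n. r m Q = 0" using r d by (auto simp: ord_ge_def)
    then show ?thesis by (intro sum.cong refl) auto
  next
    case False then show ?thesis
      by (intro sum.cong refl) (auto simp: D_def idx_upto_def unit_idx_multi_idx mdeg_unit_idx)
  qed
  finally show ?thesis .
qed

section \<open>Triangular action of lower triangular linear maps\<close>

text \<open>Substituting a lower triangular linear map into z^P
  produces z^P itself (with coefficient lambda^P) plus monomials of the same degree and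
  strictly smaller weight.\<close>
definition weight :: "nat \<Rightarrow> (nat \<Rightarrow> nat) \<Rightarrow> nat" where
  "weight n Q = (\<Sum>i<n. i * Q i)"

text \<open>The well-founded order on coefficient positions (j, Q) along which all recursive
  constructions run: first by degree, then by decreasing weight, then by the component j.\<close>
definition idx_key :: "nat \<Rightarrow> nat \<times> (nat \<Rightarrow> nat) \<Rightarrow> nat \<times> nat \<times> nat" where
  "idx_key n x = (mdeg n (snd x), n * mdeg n (snd x) - weight n (snd x), fst x)"

definition idx_less :: "nat \<Rightarrow> ((nat \<times> (nat \<Rightarrow> nat)) \<times> (nat \<times> (nat \<Rightarrow> nat))) set" where
  "idx_less n = inv_image (less_than <*lex*> less_than <*lex*> less_than) (idx_key n)"

lemma wf_idx_less: "wf (idx_less n)"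
  unfolding idx_less_def by (intro wf_inv_image wf_lex_prod wf_less_than)

lemma idx_less_iff: "((j',Q'),(j,Q)) \<in> idx_less n \<longleftrightarrow>
   mdeg n Q' < mdeg n Q \<or> (mdeg n Q' = mdeg n Q \<and>
     (n * mdeg n Q' - weight n Q' < n * mdeg n Q - weight n Q \<or>
      (n * mdeg n Q' - weight n Q' = n * mdeg n Q - weight n Q \<and> j' < j)))"
  by (auto simp: idx_less_def idx_key_def)

lemma weight_le: "weight n Q \<le> n * mdeg n Q"
  unfolding weight_def mdeg_def sum_distrib_left by (rule sum_mono) auto

lemma weight_add: "weight n (\<lambda>i. P i + R i) = weight n P + weight n R"
  by (simp add: weight_def sum.distrib distrib_left)

lemma weight_box: "P \<in> box Q \<Longrightarrow> weight n Q = weight n P + weight n (\<lambda>i. Q i - P i)"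
  unfolding weight_def
  by (subst sum.distrib[symmetric]) (auto simp: box_def diff_mult_distrib2 intro!: sum.cong)

lemma weight_unit: assumes "m < n" shows "weight n (unit_idx m) = m"
proof -
  have "weight n (unit_idx m) = (\<Sum>i<n. if i = m then m else 0)"
    unfolding weight_def unit_idx_def by (rule sum.cong) auto
  then show ?thesis using assms by simp
qed

definition leading_term :: "nat \<Rightarrow> fps_n \<Rightarrow> (nat \<Rightarrow> nat) \<Rightarrow> complex \<Rightarrow> bool" where
  "leading_term n a P c \<longleftrightarrow> (\<forall>Q\<in>multi_idx n. a Q \<noteq> 0 \<longrightarrow> mdeg n Q = mdeg n P \<and> (weight n Q < weight n P \<or> Q = P)) \<and> a P = c"

lemma leading_term_one: "leading_term n ps_one zero_idx 1"
  by (auto simp: leading_term_def ps_one_eq)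

lemma leading_term_mult_support:
  assumes a: "leading_term n a P1 c1" and b: "leading_term n b P2 c2"
    and Q: "Q \<in> multi_idx n" and R: "R \<in> box Q" and aR: "a R \<noteq> 0" and bR: "b (\<lambda>i. Q i - R i) \<noteq> 0"
  shows "mdeg n Q = mdeg n (\<lambda>i. P1 i + P2 i) \<and>
    (weight n Q < weight n (\<lambda>i. P1 i + P2 i) \<or> (R = P1 \<and> (\<lambda>i. Q i - R i) = P2))"
proof -
  have RM: "R \<in> multi_idx n" using box_multi_idx[OF Q R] .
  have QRM: "(\<lambda>i. Q i - R i) \<in> multi_idx n" using diff_multi_idx[OF Q] .
  have h1: "mdeg n R = mdeg n P1 \<and> (weight n R < weight n P1 \<or> R = P1)"
    using a aR RM by (auto simp: leading_term_def)
  have h2: "mdeg n (\<lambda>i. Q i - R i) = mdeg n P2 \<and> (weight n (\<lambda>i. Q i - R i) < weight n P2 \<or> (\<lambda>i. Q i - R i) = P2)"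
    using b bR QRM by (auto simp: leading_term_def)
  have "mdeg n Q = mdeg n (\<lambda>i. P1 i + P2 i)" using h1 h2 mdeg_box[OF R, of n] mdeg_add[of n P1 P2] by simp
  moreover have "weight n Q < weight n (\<lambda>i. P1 i + P2 i) \<or> (R = P1 \<and> (\<lambda>i. Q i - R i) = P2)"
    using h1 h2 weight_box[OF R, of n] weight_add[of n P1 P2] by auto
  ultimately show ?thesis by blast
qed

lemma leading_term_mult:
  assumes P1: "P1 \<in> multi_idx n" and P2: "P2 \<in> multi_idx n"
    and a: "leading_term n a P1 c1" and b: "leading_term n b P2 c2"
  shows "leading_term n (ps_mult a b) (\<lambda>i. P1 i + P2 i) (c1 * c2)"
proof -
  let ?P = "\<lambda>i. P1 i + P2 i"
  note key = leading_term_mult_support[OF a b]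
  have support: "\<forall>Q\<in>multi_idx n. ps_mult a b Q \<noteq> 0 \<longrightarrow> mdeg n Q = mdeg n ?P \<and> (weight n Q < weight n ?P \<or> Q = ?P)"
  proof (intro ballI impI)
    fix Q assume Q: "Q \<in> multi_idx n" and nz: "ps_mult a b Q \<noteq> 0"
    then obtain R where R: "R \<in> box Q" and t: "a R * b (\<lambda>i. Q i - R i) \<noteq> 0"
      unfolding ps_mult_box by (meson sum.neutral)
    then have "mdeg n Q = mdeg n ?P \<and> (weight n Q < weight n ?P \<or> (R = P1 \<and> (\<lambda>i. Q i - R i) = P2))"
      using key Q by auto
    moreover have "R = P1 \<and> (\<lambda>i. Q i - R i) = P2 \<Longrightarrow> Q = ?P"
      using box_add[OF R] by auto
    ultimately show "mdeg n Q = mdeg n ?P \<and> (weight n Q < weight n ?P \<or> Q = ?P)" by blast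
  qed
  have PM: "?P \<in> multi_idx n" using add_multi_idx[OF P1 P2] .
  have P1box: "P1 \<in> box ?P" by (simp add: box_def)
  have "ps_mult a b ?P = (\<Sum>R\<in>box ?P. if R = P1 then a R * b (\<lambda>i. ?P i - R i) else 0)"
    unfolding ps_mult_box
  proof (rule sum.cong[OF refl])
    fix R assume R: "R \<in> box ?P"
    have "a R * b (\<lambda>i. ?P i - R i) = 0" if "R \<noteq> P1"
      using key[OF PM R] that by fastforce
    then show "a R * b (\<lambda>i. ?P i - R i) = (if R = P1 then a R * b (\<lambda>i. ?P i - R i) else 0)" by auto
  qed
  also have "\<dots> = a P1 * b P2"
    by (subst sum.delta[OF finite_box[OF multi_idx_finite_supp[OF PM]]]) (simp add: P1box)
  finally show ?thesis using support a b by (simp add: leading_term_def)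
qed

lemma leading_term_pow:
  assumes P: "P \<in> multi_idx n" and a: "leading_term n a P c"
  shows "leading_term n (ps_pow a k) (\<lambda>i. k * P i) (c ^ k)"
proof (induction k)
  case 0 show ?case using leading_term_one by (simp add: zero_idx_def)
next
  case (Suc k)
  have kP: "(\<lambda>i. k * P i) \<in> multi_idx n" using P by (auto simp: multi_idx_def)
  have "leading_term n (ps_mult a (ps_pow a k)) (\<lambda>i. P i + k * P i) (c * c ^ k)"
    by (rule leading_term_mult[OF P kP a Suc])
  then show ?case by (simp add: ps_pow_Suc)
qed

definition lower_tri :: "nat \<Rightarrow> complex mat \<Rightarrow> bool" where
  "lower_tri n T \<longleftrightarrow> (\<forall>i<n. \<forall>m<n. i < m \<longrightarrow> T $$ (i,m) = 0)"

lemma lower_tri_ajf: "almost_jordan_form n T \<Longrightarrow> lower_tri n T"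
  unfolding almost_jordan_form_def lower_tri_def by auto

lemma leading_term_linmap:
  assumes T: "lower_tri n T" and m: "m < n"
  shows "leading_term n (linmap n T m) (unit_idx m) (T $$ (m,m))"
  unfolding leading_term_def
proof (rule conjI, intro ballI impI)
  fix Q assume Q: "Q \<in> multi_idx n" and nz: "linmap n T m Q \<noteq> 0"
  then obtain l where l: "l < n" "Q = unit_idx l" using linmap_nonunit by blast
  then have "T $$ (m,l) \<noteq> 0" using nz by (simp add: linmap_unit)
  then have "l \<le> m" using T l m by (auto simp: lower_tri_def not_le[symmetric])
  then show "mdeg n Q = mdeg n (unit_idx m) \<and> (weight n Q < weight n (unit_idx m) \<or> Q = unit_idx m)"
    using l m by (auto simp: mdeg_unit_idx weight_unit)
next
  show "linmap n T m (unit_idx m) = T $$ (m,m)" using m by (simp add: linmap_unit)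
qed

lemma leading_term_prodpow:
  assumes T: "lower_tri n T" and P: "P \<in> multi_idx n"
  shows "N \<le> n \<Longrightarrow> leading_term n (ps_prodpow (linmap n T) P N) (\<lambda>i. if i < N then P i else 0) (\<Prod>i<N. T $$ (i,i) ^ P i)"
proof (induction N)
  case 0 then show ?case using leading_term_one by (simp add: zero_idx_def)
next
  case (Suc N)
  have NP: "(\<lambda>i. if i < N then P i else 0) \<in> multi_idx n" using Suc.prems by (auto simp: multi_idx_def)
  have uN: "(\<lambda>i. P N * unit_idx N i) \<in> multi_idx n" using Suc.prems by (auto simp: multi_idx_def unit_idx_def)
  have t2: "leading_term n (ps_pow (linmap n T N) (P N)) (\<lambda>i. P N * unit_idx N i) (T $$ (N,N) ^ P N)"
    using leading_term_pow[OF unit_idx_multi_idx leading_term_linmap[OF T]] Suc.prems by simp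
  have "leading_term n (ps_mult (ps_prodpow (linmap n T) P N) (ps_pow (linmap n T N) (P N)))
          (\<lambda>i. (if i < N then P i else 0) + P N * unit_idx N i) ((\<Prod>i<N. T $$ (i,i) ^ P i) * T $$ (N,N) ^ P N)"
    by (rule leading_term_mult[OF NP uN _ t2]) (use Suc in auto)
  moreover have "(\<lambda>i. (if i < N then P i else 0) + P N * unit_idx N i) = (\<lambda>i. if i < Suc N then P i else 0)"
    by (auto simp: unit_idx_def fun_eq_iff less_Suc_eq)
  ultimately show ?case by simp
qed

lemma leading_term_prodpow_n:
  assumes T: "lower_tri n T" and P: "P \<in> multi_idx n"
  shows "leading_term n (ps_prodpow (linmap n T) P n) P (\<Prod>i<n. T $$ (i,i) ^ P i)"
proof -
  have "(\<lambda>i. if i < n then P i else 0) = P" using P by (auto simp: multi_idx_def fun_eq_iff)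
  then show ?thesis using leading_term_prodpow[OF T P, of n] by simp
qed

text \<open>lambda_j - lambda^Q for the diagonal lambda of T: the factor by which the Q-th
  coefficient of the j-th component enters a homological equation.  It vanishes exactly on
  the resonances (for deg Q >= 2).\<close>
definition res_gap :: "nat \<Rightarrow> complex mat \<Rightarrow> nat \<Rightarrow> (nat \<Rightarrow> nat) \<Rightarrow> complex" where
  "res_gap n T j Q = T $$ (j,j) - (\<Prod>i<n. T $$ (i,i) ^ Q i)"

lemma res_gap_nonzero_if_no_common_resonance:
  assumes "Res n (\<lambda>i. T1 $$ (i,i)) j \<inter> Res n (\<lambda>i. T2 $$ (i,i)) j = {}"
    and "Q \<in> multi_idx n" "2 \<le> mdeg n Q"
  shows "res_gap n T1 j Q \<noteq> 0 \<or> res_gap n T2 j Q \<noteq> 0"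
  using assms by (auto simp: Res_def res_gap_def)

text \<open>Row j of a lower triangular T only sees components m <= j, which are earlier in
  the recursion order when m < j.\<close>
lemma lower_tri_row:
  assumes T: "lower_tri n T" and j: "j < n" and Q: "Q \<in> multi_idx n"
    and z: "\<forall>j'<n. \<forall>Q'\<in>multi_idx n. ((j',Q'),(j,Q)) \<in> idx_less n \<longrightarrow> \<delta> j' Q' = 0"
  shows "(\<Sum>m<n. T $$ (j,m) * \<delta> m Q) = T $$ (j,j) * \<delta> j Q"
proof -
  have "(\<Sum>m<n. T $$ (j,m) * \<delta> m Q) = (\<Sum>m<n. if m = j then T $$ (j,m) * \<delta> m Q else 0)"
  proof (rule sum.cong[OF refl])
    fix m assume m: "m \<in> {..<n}"
    show "T $$ (j,m) * \<delta> m Q = (if m = j then T $$ (j,m) * \<delta> m Q else 0)"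
    proof (cases "m < j")
      case True
      then have "((m,Q),(j,Q)) \<in> idx_less n" by (simp add: idx_less_iff)
      then show ?thesis using z m Q by auto
    next
      case False
      then show ?thesis using T j m by (auto simp: lower_tri_def)
    qed
  qed
  then show ?thesis using j by simp
qed

text \<open>Dually, in delta o T the coefficient at (j,Q) is delta_j(Q) lambda^Q plus contributions of
  monomials of higher weight, which are earlier in the recursion order.\<close>
lemma fcomp_lower_tri_coeff:
  assumes T: "lower_tri n T" and j: "j < n" and Q: "Q \<in> multi_idx n"
    and z: "\<forall>j'<n. \<forall>Q'\<in>multi_idx n. ((j',Q'),(j,Q)) \<in> idx_less n \<longrightarrow> \<delta> j' Q' = 0"
  shows "fcomp n \<delta> (linmap n T) j Q = \<delta> j Q * (\<Prod>i<n. T $$ (i,i) ^ Q i)"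
proof -
  have "fcomp n \<delta> (linmap n T) j Q =
      (\<Sum>P\<in>idx_upto n (mdeg n Q). if P = Q then \<delta> j P * ps_prodpow (linmap n T) P n Q else 0)"
    unfolding fcomp_ps_subst ps_subst_def
  proof (rule sum.cong[OF refl])
    fix P assume P: "P \<in> idx_upto n (mdeg n Q)"
    have PM: "P \<in> multi_idx n" using P by (simp add: idx_upto_def)
    have "\<delta> j P * ps_prodpow (linmap n T) P n Q = 0" if PQ: "P \<noteq> Q"
    proof (rule ccontr)
      assume "\<delta> j P * ps_prodpow (linmap n T) P n Q \<noteq> 0"
      then have d: "\<delta> j P \<noteq> 0" and g: "ps_prodpow (linmap n T) P n Q \<noteq> 0" by auto
      have "mdeg n Q = mdeg n P \<and> (weight n Q < weight n P \<or> Q = P)"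
        using leading_term_prodpow_n[OF T PM] g Q by (auto simp: leading_term_def)
      then have "weight n Q < weight n P" "mdeg n Q = mdeg n P" using PQ by auto
      then have "((j,P),(j,Q)) \<in> idx_less n"
        using weight_le[of n P] weight_le[of n Q] by (auto simp: idx_less_iff)
      then show False using z j PM d by auto
    qed
    then show "\<delta> j P * ps_prodpow (linmap n T) P n Q =
        (if P = Q then \<delta> j P * ps_prodpow (linmap n T) P n Q else 0)" by auto
  qed
  also have "\<dots> = \<delta> j Q * (\<Prod>i<n. T $$ (i,i) ^ Q i)"
  proof -
    have "Q \<in> idx_upto n (mdeg n Q)" using Q by (simp add: idx_upto_def)
    then show ?thesis using leading_term_prodpow_n[OF T Q]
      by (simp add: sum.delta[OF finite_idx_upto] leading_term_def)
  qed
  finally show ?thesis .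
qed

text \<open>The homological operator delta -> T delta - delta o T is diagonal modulo earlier
  coefficients, with eigenvalue lambda_j - lambda^Q at position (j,Q).\<close>
lemma homological_eq:
  assumes T: "lower_tri n T" and j: "j < n" and Q: "Q \<in> multi_idx n"
    and z: "\<forall>j'<n. \<forall>Q'\<in>multi_idx n. ((j',Q'),(j,Q)) \<in> idx_less n \<longrightarrow> \<delta> j' Q' = 0"
  shows "(\<Sum>m<n. T $$ (j,m) * \<delta> m Q) - fcomp n \<delta> (linmap n T) j Q = res_gap n T j Q * \<delta> j Q"
  unfolding lower_tri_row[OF assms] fcomp_lower_tri_coeff[OF assms]
  by (simp add: res_gap_def algebra_simps)

section \<open>Solving triangular systems along the recursion order\<close>

definition tangent_to_id :: "nat \<Rightarrow> fmap \<Rightarrow> bool" where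
  "tangent_to_id n \<phi> \<longleftrightarrow> (\<forall>j<n. \<forall>Q\<in>multi_idx n. mdeg n Q = 1 \<longrightarrow> \<phi> j Q = fid j Q)"

lemma tangent_to_id_unit:
  "tangent_to_id n \<phi> \<Longrightarrow> j < n \<Longrightarrow> m < n \<Longrightarrow> \<phi> j (unit_idx m) = (if m = j then 1 else 0)"
  using unit_idx_multi_idx mdeg_unit_idx by (auto simp: tangent_to_id_def fid_def unit_idx_inj)

definition before :: "nat \<Rightarrow> fmap \<Rightarrow> nat \<Rightarrow> (nat \<Rightarrow> nat) \<Rightarrow> fmap" where
  "before n \<phi> j Q = (\<lambda>j' Q'. if ((j',Q'),(j,Q)) \<in> idx_less n then \<phi> j' Q' else 0)"

definition rec_step :: "nat \<Rightarrow> (fmap \<Rightarrow> nat \<Rightarrow> (nat \<Rightarrow> nat) \<Rightarrow> complex) \<Rightarrow> (nat \<Rightarrow> (nat \<Rightarrow> nat) \<Rightarrow> complex)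
   \<Rightarrow> ((nat \<times> (nat \<Rightarrow> nat)) \<Rightarrow> complex) \<Rightarrow> (nat \<times> (nat \<Rightarrow> nat)) \<Rightarrow> complex" where
  "rec_step n E Dv g x =
    (if mdeg n (snd x) \<le> 1 then fid (fst x) (snd x)
     else if Dv (fst x) (snd x) = 0 then 0
     else - E (before n (\<lambda>j' Q'. g (j',Q')) (fst x) (snd x)) (fst x) (snd x) / Dv (fst x) (snd x))"

definition rec_sol :: "nat \<Rightarrow> (fmap \<Rightarrow> nat \<Rightarrow> (nat \<Rightarrow> nat) \<Rightarrow> complex) \<Rightarrow> (nat \<Rightarrow> (nat \<Rightarrow> nat) \<Rightarrow> complex) \<Rightarrow> fmap" where
  "rec_sol n E Dv = (\<lambda>j Q. wfrec (idx_less n) (rec_step n E Dv) (j,Q))"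

lemma rec_sol_eq:
  "rec_sol n E Dv j Q = (if mdeg n Q \<le> 1 then fid j Q else if Dv j Q = 0 then 0
      else - E (before n (rec_sol n E Dv) j Q) j Q / Dv j Q)"
proof -
  have "rec_sol n E Dv j Q =
      rec_step n E Dv (cut (wfrec (idx_less n) (rec_step n E Dv)) (idx_less n) (j,Q)) (j,Q)"
    unfolding rec_sol_def by (rule wfrec[OF wf_idx_less])
  moreover have "before n (\<lambda>j' Q'. cut (wfrec (idx_less n) (rec_step n E Dv)) (idx_less n) (j,Q) (j',Q')) j Q
      = before n (rec_sol n E Dv) j Q"
    by (auto simp: before_def rec_sol_def cut_def fun_eq_iff)
  ultimately show ?thesis by (simp add: rec_step_def)
qed

text \<open>Let E phi j Q be an "error coefficient" which, for deg Q >= 2,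
  depends on phi only through earlier coefficients and phi j Q itself, affinely with slope
  Dv j Q.\<close>
lemma rec_construct:
  fixes E :: "fmap \<Rightarrow> nat \<Rightarrow> (nat \<Rightarrow> nat) \<Rightarrow> complex" and Dv :: "nat \<Rightarrow> (nat \<Rightarrow> nat) \<Rightarrow> complex"
  assumes loc: "\<And>\<phi> \<phi>' j Q. j < n \<Longrightarrow> Q \<in> multi_idx n \<Longrightarrow> 2 \<le> mdeg n Q \<Longrightarrow>
      fixes_origin n \<phi> \<Longrightarrow> fixes_origin n \<phi>' \<Longrightarrow>
      (\<forall>j'<n. \<forall>Q'\<in>multi_idx n. ((j',Q'),(j,Q)) \<in> idx_less n \<longrightarrow> \<phi> j' Q' = \<phi>' j' Q') \<Longrightarrow>
      E \<phi> j Q - E \<phi>' j Q = Dv j Q * (\<phi> j Q - \<phi>' j Q)"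
  shows "\<exists>\<phi>. fixes_origin n \<phi> \<and> tangent_to_id n \<phi> \<and>
     (\<forall>j<n. \<forall>Q\<in>multi_idx n. 2 \<le> mdeg n Q \<longrightarrow> Dv j Q \<noteq> 0 \<longrightarrow> E \<phi> j Q = 0)"
proof -
  define \<phi> where "\<phi> = rec_sol n E Dv"
  have fo: "fixes_origin n \<phi>"
    unfolding fixes_origin_def \<phi>_def using rec_sol_eq by (simp add: fid_def zero_idx_def[symmetric])
  have tan: "tangent_to_id n \<phi>" using rec_sol_eq by (simp add: tangent_to_id_def \<phi>_def)
  have "E \<phi> j Q = 0" if j: "j < n" and Q: "Q \<in> multi_idx n" and d: "2 \<le> mdeg n Q" and Dn: "Dv j Q \<noteq> 0" for j Q
  proof -
    have fo0: "fixes_origin n (before n \<phi> j Q)"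
      using fo d unfolding fixes_origin_def before_def zero_idx_def[symmetric] by (simp add: idx_less_iff)
    have "E \<phi> j Q - E (before n \<phi> j Q) j Q = Dv j Q * (\<phi> j Q - before n \<phi> j Q j Q)"
      by (rule loc[OF j Q d fo fo0]) (simp add: before_def)
    also have "\<dots> = - E (before n \<phi> j Q) j Q"
      using rec_sol_eq[of n E Dv j Q] d Dn by (simp add: \<phi>_def before_def idx_less_iff)
    finally show "E \<phi> j Q = 0" by simp
  qed
  then show ?thesis using fo tan by blast
qed

lemma low_degree_coeff_eq:
  assumes F: "fixes_origin n F" and G: "fixes_origin n G" and FG: "lin_part n F = lin_part n G"
    and j: "j < n" and Q: "Q \<in> multi_idx n" and d: "mdeg n Q \<le> 1"
  shows "F j Q = G j Q"
proof (cases "mdeg n Q = 0")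
  case True
  then have "Q = zero_idx" using mdeg_eq_0_iff Q by blast
  then show ?thesis using F G j by (simp add: fixes_origin_def zero_idx_def)
next
  case False
  then obtain q where "q < n" "Q = unit_idx q" using mdeg_eq_1 Q d by (metis le_neq_implies_less less_one)
  then show ?thesis using lin_entry[OF refl j, of _ F] lin_entry[OF refl j, of _ G] FG by simp
qed

lemma lin_part_fid: "lin_part n fid = 1\<^sub>m n"
  by (rule eq_matI) (auto simp: lin_part_def fid_def unit_idx_inj)

lemma fixes_origin_fid: "fixes_origin n fid"
  by (simp add: fixes_origin_def fid_def unit_idx_def fun_eq_iff)

lemma lin_part_tangent_to_id: "tangent_to_id n \<phi> \<Longrightarrow> lin_part n \<phi> = 1\<^sub>m n"
  by (rule eq_matI) (auto simp: lin_part_def tangent_to_id_unit)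

text \<open>A right inverse of a tangent-to-identity map, found by the recursive solver: the
  coefficient (j,Q) of phi o psi - id depends on psi_j(Q) with slope 1.\<close>
lemma right_inverse_exists:
  assumes fo: "fixes_origin n \<phi>" and lin: "tangent_to_id n \<phi>"
  shows "\<exists>\<psi>. fixes_origin n \<psi> \<and> tangent_to_id n \<psi> \<and> fmap_eq n (fcomp n \<phi> \<psi>) fid"
proof -
  define E where "E = (\<lambda>\<psi> j Q. fcomp n \<phi> \<psi> j Q - fid j Q)"
  have loc: "E \<psi> j Q - E \<psi>' j Q = 1 * (\<psi> j Q - \<psi>' j Q)"
    if j: "j < n" and Q: "Q \<in> multi_idx n" and d: "2 \<le> mdeg n Q" and f1: "fixes_origin n \<psi>"
      and f2: "fixes_origin n \<psi>'"
      and ag: "\<forall>j'<n. \<forall>Q'\<in>multi_idx n. ((j',Q'),(j,Q)) \<in> idx_less n \<longrightarrow> \<psi> j' Q' = \<psi>' j' Q'" for \<psi> \<psi>' j Q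
  proof -
    define r where "r = (\<lambda>m R. \<psi> m R - \<psi>' m R)"
    have e: "\<psi> = (\<lambda>m R. \<psi>' m R + r m R)" by (simp add: r_def)
    have rord: "\<forall>m<n. ord_ge n (mdeg n Q) (r m)"
      using ag by (auto simp: ord_ge_def r_def idx_less_iff)
    have "E \<psi> j Q - E \<psi>' j Q = ps_subst n (\<lambda>m R. \<psi>' m R + r m R) (\<phi> j) Q - ps_subst n \<psi>' (\<phi> j) Q"
      unfolding E_def fcomp_ps_subst by (simp add: e[symmetric])
    also have "\<dots> = (\<Sum>m<n. \<phi> j (unit_idx m) * r m Q)"
      by (rule ps_subst_perturb) (use f2 rord d Q in \<open>auto simp: fixes_origin_iff\<close>)
    also have "\<dots> = (\<Sum>m<n. if m = j then r m Q else 0)"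
      by (rule sum.cong) (auto simp: tangent_to_id_unit[OF lin j])
    also have "\<dots> = r j Q" using j by simp
    finally show ?thesis by (simp add: r_def)
  qed
  obtain \<psi> where fo\<psi>: "fixes_origin n \<psi>" and lin\<psi>: "tangent_to_id n \<psi>"
    and sol: "\<forall>j<n. \<forall>Q\<in>multi_idx n. 2 \<le> mdeg n Q \<longrightarrow> E \<psi> j Q = 0"
    using rec_construct[of n E "\<lambda>_ _. 1"] loc by auto
  have lin_comp: "lin_part n (fcomp n \<phi> \<psi>) = lin_part n fid"
    using lin_part_fcomp[OF fo\<psi>] lin_part_tangent_to_id[OF lin] lin_part_tangent_to_id[OF lin\<psi>]
    by (simp add: lin_part_fid)
  have "fmap_eq n (fcomp n \<phi> \<psi>) fid"
    unfolding fmap_eq_def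
  proof (intro allI impI ballI)
    fix j Q assume j: "j < n" and Q: "Q \<in> multi_idx n"
    show "fcomp n \<phi> \<psi> j Q = fid j Q"
    proof (cases "mdeg n Q \<le> 1")
      case True
      then show ?thesis using low_degree_coeff_eq[OF fixes_origin_fcomp[OF fo] fixes_origin_fid lin_comp j Q]
        by simp
    next
      case False then show ?thesis using sol j Q by (simp add: E_def)
    qed
  qed
  then show ?thesis using fo\<psi> lin\<psi> by blast
qed

text \<open>Tangent-to-identity maps are formally invertible: a right inverse psi of phi and a
  right inverse chi of psi give phi = chi.\<close>
lemma inverse_exists:
  assumes fo: "fixes_origin n \<phi>" and lin: "tangent_to_id n \<phi>"
  shows "\<exists>\<psi>. formal_inverse n \<phi> \<psi>"
proof -
  obtain \<psi> where fo\<psi>: "fixes_origin n \<psi>" and lin\<psi>: "tangent_to_id n \<psi>"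
    and r: "fmap_eq n (fcomp n \<phi> \<psi>) fid"
    using right_inverse_exists[OF fo lin] by blast
  obtain \<chi> where fo\<chi>: "fixes_origin n \<chi>" and r2: "fmap_eq n (fcomp n \<psi> \<chi>) fid"
    using right_inverse_exists[OF fo\<psi> lin\<psi>] by blast
  have "fmap_eq n \<phi> (fcomp n \<phi> fid)" by (rule fmap_eq_sym, rule fcomp_fid_right)
  also have "fmap_eq n \<dots> (fcomp n \<phi> (fcomp n \<psi> \<chi>))" by (rule fcomp_cong2, rule fmap_eq_sym, rule r2)
  also have "fmap_eq n \<dots> (fcomp n (fcomp n \<phi> \<psi>) \<chi>)" by (rule fmap_eq_sym, rule fcomp_assoc[OF fo\<psi> fo\<chi>])
  also have "fmap_eq n \<dots> (fcomp n fid \<chi>)" by (rule fcomp_cong1, rule r)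
  also have "fmap_eq n \<dots> \<chi>" by (rule fcomp_fid_left[OF fo\<chi>])
  finally have "fmap_eq n \<phi> \<chi>" .
  then have "fmap_eq n (fcomp n \<psi> \<phi>) (fcomp n \<psi> \<chi>)" by (rule fcomp_cong2)
  then have "fmap_eq n (fcomp n \<psi> \<phi>) fid" using r2 fmap_eq_trans by blast
  then show ?thesis using fo\<psi> r by (auto simp: formal_inverse_def)
qed

section \<open>Conjugating two commuting maps to their linear parts\<close>

lemma idx_less_induct[consumes 2, case_names step]:
  assumes "j < n" "Q \<in> multi_idx n"
    and step: "\<And>j Q. j < n \<Longrightarrow> Q \<in> multi_idx n \<Longrightarrow>
      (\<forall>j'<n. \<forall>Q'\<in>multi_idx n. ((j',Q'),(j,Q)) \<in> idx_less n \<longrightarrow> P j' Q') \<Longrightarrow> P j Q"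
  shows "P j Q"
proof -
  have "\<forall>j Q. x = (j,Q) \<longrightarrow> j < n \<longrightarrow> Q \<in> multi_idx n \<longrightarrow> P j Q" for x
  proof (induction x rule: wf_induct[OF wf_idx_less[of n]])
    case (1 x)
    then show ?case using step by blast
  qed
  then show ?thesis using assms(1,2) by blast
qed

lemma not_unit_idx: "2 \<le> mdeg n Q \<Longrightarrow> \<forall>m<n. Q \<noteq> unit_idx m"
  using mdeg_unit_idx by fastforce

definition conj_defect :: "nat \<Rightarrow> fmap \<Rightarrow> fmap \<Rightarrow> complex mat \<Rightarrow> fmap" where
  "conj_defect n g \<phi> T = (\<lambda>j Q. fcomp n g \<phi> j Q - fcomp n \<phi> (linmap n T) j Q)"

lemma conj_defect_local:
  assumes g: "fixes_origin n g" and gT: "lin_part n g = T" and T: "lower_tri n T"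
    and j: "j < n" and Q: "Q \<in> multi_idx n" and d: "2 \<le> mdeg n Q"
    and p: "fixes_origin n \<phi>" and p': "fixes_origin n \<phi>'"
    and ag: "\<forall>j'<n. \<forall>Q'\<in>multi_idx n. ((j',Q'),(j,Q)) \<in> idx_less n \<longrightarrow> \<phi> j' Q' = \<phi>' j' Q'"
  shows "conj_defect n g \<phi> T j Q - conj_defect n g \<phi>' T j Q = res_gap n T j Q * (\<phi> j Q - \<phi>' j Q)"
proof -
  define \<delta> where "\<delta> = (\<lambda>m R. \<phi> m R - \<phi>' m R)"
  have e: "\<phi> = (\<lambda>m R. \<phi>' m R + \<delta> m R)" by (simp add: \<delta>_def)
  have dord: "\<forall>m<n. ord_ge n (mdeg n Q) (\<delta> m)"
    using ag by (auto simp: ord_ge_def \<delta>_def idx_less_iff)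
  have outer: "fcomp n g \<phi> j Q - fcomp n g \<phi>' j Q = (\<Sum>m<n. T $$ (j,m) * \<delta> m Q)"
  proof -
    have "fcomp n g \<phi> j Q - fcomp n g \<phi>' j Q =
        ps_subst n (\<lambda>m R. \<phi>' m R + \<delta> m R) (g j) Q - ps_subst n \<phi>' (g j) Q"
      unfolding fcomp_ps_subst by (simp add: e[symmetric])
    also have "\<dots> = (\<Sum>m<n. g j (unit_idx m) * \<delta> m Q)"
      by (rule ps_subst_perturb) (use p' dord d Q in \<open>auto simp: fixes_origin_iff\<close>)
    also have "\<dots> = (\<Sum>m<n. T $$ (j,m) * \<delta> m Q)"
      by (rule sum.cong) (auto simp: lin_entry[OF gT j])
    finally show ?thesis .
  qed
  have inner: "fcomp n \<phi> (linmap n T) j Q - fcomp n \<phi>' (linmap n T) j Q = fcomp n \<delta> (linmap n T) j Q"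
    unfolding fcomp_ps_subst \<delta>_def by (simp add: ps_subst_diff)
  have "(\<Sum>m<n. T $$ (j,m) * \<delta> m Q) - fcomp n \<delta> (linmap n T) j Q = res_gap n T j Q * \<delta> j Q"
    by (rule homological_eq[OF T j Q]) (use ag in \<open>auto simp: \<delta>_def\<close>)
  then show ?thesis using outer inner by (simp add: conj_defect_def \<delta>_def algebra_simps)
qed

lemma conj_defect_low_degree:
  assumes g: "fixes_origin n g" "lin_part n g = T" and p: "fixes_origin n \<phi>" "tangent_to_id n \<phi>"
    and j: "j < n" and Q: "Q \<in> multi_idx n" and d: "mdeg n Q \<le> 1"
  shows "conj_defect n g \<phi> T j Q = 0"
proof -
  have "lin_part n (fcomp n g \<phi>) = lin_part n (fcomp n \<phi> (linmap n T))"
    using lin_part_fcomp[OF p(1)] lin_part_fcomp[OF fixes_origin_linmap] g(2)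
      lin_part_tangent_to_id[OF p(2)] lin_part_carrier[of n g]
    by (simp add: lin_part_linmap)
  then show ?thesis
    using low_degree_coeff_eq[OF fixes_origin_fcomp[OF g(1)] fixes_origin_fcomp[OF p(1)] _ j Q d]
    by (simp add: conj_defect_def)
qed

lemma fcomp_conj_defect_expand:
  assumes ga: "fixes_origin n ga" and gb: "fixes_origin n gb" and p: "fixes_origin n \<phi>"
    and gaT: "lin_part n ga = Ta" and Ta: "Ta \<in> carrier_mat n n" and Tb: "Tb \<in> carrier_mat n n"
    and d: "2 \<le> mdeg n Q" and Q: "Q \<in> multi_idx n" and j: "j < n"
    and rb: "\<forall>m<n. ord_ge n (mdeg n Q) (conj_defect n gb \<phi> Tb m)"
  shows "fcomp n (fcomp n ga gb) \<phi> j Q = fcomp n \<phi> (linmap n (Ta * Tb)) j Q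
        + fcomp n (conj_defect n ga \<phi> Ta) (linmap n Tb) j Q
        + (\<Sum>m<n. Ta $$ (j,m) * conj_defect n gb \<phi> Tb m Q)"
proof -
  define u where "u = fcomp n \<phi> (linmap n Tb)"
  define rb' where "rb' = conj_defect n gb \<phi> Tb"
  define ra where "ra = conj_defect n ga \<phi> Ta"
  have e1: "fcomp n gb \<phi> = (\<lambda>m R. u m R + rb' m R)" by (simp add: rb'_def u_def conj_defect_def)
  have e2: "fcomp n ga \<phi> = (\<lambda>m R. fcomp n \<phi> (linmap n Ta) m R + ra m R)"
    by (simp add: ra_def conj_defect_def)
  have uo: "fixes_origin n u" unfolding u_def by (rule fixes_origin_fcomp[OF p])
  have lo: "\<And>T. fixes_origin n (linmap n T)" by (rule fixes_origin_linmap)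
  have "fcomp n (fcomp n ga gb) \<phi> j Q = fcomp n ga (fcomp n gb \<phi>) j Q"
    using fcomp_assoc[OF gb p] j Q by (simp add: fmap_eq_def)
  also have "\<dots> = ps_subst n (\<lambda>m R. u m R + rb' m R) (ga j) Q" by (simp add: fcomp_ps_subst e1)
  also have "\<dots> = ps_subst n u (ga j) Q + (\<Sum>m<n. ga j (unit_idx m) * rb' m Q)"
  proof -
    have "ps_subst n (\<lambda>m R. u m R + rb' m R) (ga j) Q - ps_subst n u (ga j) Q =
        (\<Sum>m<n. ga j (unit_idx m) * rb' m Q)"
      by (rule ps_subst_perturb) (use uo rb d Q in \<open>auto simp: fixes_origin_iff rb'_def\<close>)
    then show ?thesis by (simp add: diff_eq_eq add_ac)
  qed
  also have "ps_subst n u (ga j) Q = fcomp n (fcomp n ga \<phi>) (linmap n Tb) j Q"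
    using fcomp_assoc[OF p lo, of ga] j Q by (simp add: fmap_eq_def fcomp_ps_subst u_def)
  also have "\<dots> = fcomp n (fcomp n \<phi> (linmap n Ta)) (linmap n Tb) j Q + fcomp n ra (linmap n Tb) j Q"
    by (simp add: e2 fcomp_ps_subst ps_subst_add)
  also have "fcomp n (fcomp n \<phi> (linmap n Ta)) (linmap n Tb) j Q = fcomp n \<phi> (linmap n (Ta * Tb)) j Q"
    using fcomp_assoc[OF lo lo, of \<phi> Ta Tb] fcomp_cong2[OF linmap_comp[OF Ta Tb], of \<phi>] j Q
    by (simp add: fmap_eq_def)
  also have "(\<Sum>m<n. ga j (unit_idx m) * rb' m Q) = (\<Sum>m<n. Ta $$ (j,m) * rb' m Q)"
    by (rule sum.cong) (auto simp: lin_entry[OF gaT j])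
  finally show ?thesis by (simp add: ra_def rb'_def u_def)
qed

text \<open>It comes from
  expanding g1 o g2 o phi = g2 o g1 o phi, using that T1 and T2 commute.\<close>
lemma conj_defects_relation:
  assumes g1: "fixes_origin n g1" and g2: "fixes_origin n g2" and p: "fixes_origin n \<phi>"
    and T1: "T1 \<in> carrier_mat n n" "lower_tri n T1" "lin_part n g1 = T1"
    and T2: "T2 \<in> carrier_mat n n" "lower_tri n T2" "lin_part n g2 = T2"
    and c12: "fmap_eq n (fcomp n g1 g2) (fcomp n g2 g1)"
    and j: "j < n" and Q: "Q \<in> multi_idx n" and d: "2 \<le> mdeg n Q"
    and z: "\<forall>j'<n. \<forall>Q'\<in>multi_idx n. ((j',Q'),(j,Q)) \<in> idx_less n \<longrightarrow>
              conj_defect n g1 \<phi> T1 j' Q' = 0 \<and> conj_defect n g2 \<phi> T2 j' Q' = 0"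
  shows "res_gap n T1 j Q * conj_defect n g2 \<phi> T2 j Q = res_gap n T2 j Q * conj_defect n g1 \<phi> T1 j Q"
proof -
  let ?r1 = "conj_defect n g1 \<phi> T1" and ?r2 = "conj_defect n g2 \<phi> T2"
  have comm: "T1 * T2 = T2 * T1"
    using lin_part_fcomp[OF g2, of g1] lin_part_fcomp[OF g1, of g2] lin_part_cong[OF c12] T1(3) T2(3)
    by simp
  have o1: "\<forall>m<n. ord_ge n (mdeg n Q) (?r1 m)" and o2: "\<forall>m<n. ord_ge n (mdeg n Q) (?r2 m)"
    using z by (auto simp: ord_ge_def idx_less_iff)
  have "fcomp n (fcomp n g1 g2) \<phi> j Q = fcomp n (fcomp n g2 g1) \<phi> j Q"
    using fcomp_cong1[OF c12, of \<phi>] j Q by (simp add: fmap_eq_def)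
  then have "(\<Sum>m<n. T1 $$ (j,m) * ?r2 m Q) - fcomp n ?r2 (linmap n T1) j Q
           = (\<Sum>m<n. T2 $$ (j,m) * ?r1 m Q) - fcomp n ?r1 (linmap n T2) j Q"
    using fcomp_conj_defect_expand[OF g1 g2 p T1(3) T1(1) T2(1) d Q j o2]
      fcomp_conj_defect_expand[OF g2 g1 p T2(3) T2(1) T1(1) d Q j o1] comm
    by (simp add: algebra_simps)
  moreover have "(\<Sum>m<n. T1 $$ (j,m) * ?r2 m Q) - fcomp n ?r2 (linmap n T1) j Q = res_gap n T1 j Q * ?r2 j Q"
    by (rule homological_eq[OF T1(2) j Q]) (use z in auto)
  moreover have "(\<Sum>m<n. T2 $$ (j,m) * ?r1 m Q) - fcomp n ?r1 (linmap n T2) j Q = res_gap n T2 j Q * ?r1 j Q"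
    by (rule homological_eq[OF T2(2) j Q]) (use z in auto)
  ultimately show ?thesis by simp
qed

text \<open>Hence it suffices to kill, at every (j,Q), one of the two defects whose factor is
  nonzero: the other one then vanishes automatically.\<close>
lemma conj_defects_vanish:
  assumes g1: "fixes_origin n g1" and g2: "fixes_origin n g2"
    and p: "fixes_origin n \<phi>" "tangent_to_id n \<phi>"
    and T1: "T1 \<in> carrier_mat n n" "lower_tri n T1" "lin_part n g1 = T1"
    and T2: "T2 \<in> carrier_mat n n" "lower_tri n T2" "lin_part n g2 = T2"
    and c12: "fmap_eq n (fcomp n g1 g2) (fcomp n g2 g1)"
    and sol: "\<forall>j<n. \<forall>Q\<in>multi_idx n. 2 \<le> mdeg n Q \<longrightarrow>
       (res_gap n T1 j Q \<noteq> 0 \<and> conj_defect n g1 \<phi> T1 j Q = 0) \<or>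
       (res_gap n T2 j Q \<noteq> 0 \<and> conj_defect n g2 \<phi> T2 j Q = 0)"
    and j: "j < n" and Q: "Q \<in> multi_idx n"
  shows "conj_defect n g1 \<phi> T1 j Q = 0 \<and> conj_defect n g2 \<phi> T2 j Q = 0"
  using j Q
proof (induction j Q rule: idx_less_induct)
  case (step j Q)
  show ?case
  proof (cases "mdeg n Q \<le> 1")
    case True
    then show ?thesis
      using conj_defect_low_degree[OF g1 T1(3) p step(1,2)] conj_defect_low_degree[OF g2 T2(3) p step(1,2)] by simp
  next
    case False
    then have d: "2 \<le> mdeg n Q" by simp
    have rel: "res_gap n T1 j Q * conj_defect n g2 \<phi> T2 j Q = res_gap n T2 j Q * conj_defect n g1 \<phi> T1 j Q"
      by (rule conj_defects_relation[OF g1 g2 p(1) T1 T2 c12 step(1,2) d]) (use step(3) in blast)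
    from sol step(1,2) d consider
        "res_gap n T1 j Q \<noteq> 0" "conj_defect n g1 \<phi> T1 j Q = 0"
      | "res_gap n T2 j Q \<noteq> 0" "conj_defect n g2 \<phi> T2 j Q = 0" by blast
    then show ?thesis using rel by cases simp_all
  qed
qed

text \<open>Two commuting germs whose linear parts are lower triangular without common
  resonances are simultaneously conjugated to their linear parts by one tangent-to-identity
  phi: at each (j,Q) we solve the homological equation of a map with nonzero factor.\<close>
lemma simultaneous_conjugation:
  assumes g1: "fixes_origin n g1" and g2: "fixes_origin n g2"
    and T1: "T1 \<in> carrier_mat n n" "lower_tri n T1" "lin_part n g1 = T1"
    and T2: "T2 \<in> carrier_mat n n" "lower_tri n T2" "lin_part n g2 = T2"
    and c12: "fmap_eq n (fcomp n g1 g2) (fcomp n g2 g1)"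
    and nores: "\<forall>j<n. \<forall>Q\<in>multi_idx n. 2 \<le> mdeg n Q \<longrightarrow> res_gap n T1 j Q \<noteq> 0 \<or> res_gap n T2 j Q \<noteq> 0"
  shows "\<exists>\<phi>. fixes_origin n \<phi> \<and> tangent_to_id n \<phi> \<and>
    fmap_eq n (fcomp n g1 \<phi>) (fcomp n \<phi> (linmap n T1)) \<and> fmap_eq n (fcomp n g2 \<phi>) (fcomp n \<phi> (linmap n T2))"
proof -
  define E where "E = (\<lambda>\<phi> j Q. if res_gap n T1 j Q \<noteq> 0 then conj_defect n g1 \<phi> T1 j Q
                                                    else conj_defect n g2 \<phi> T2 j Q)"
  define Dv where "Dv = (\<lambda>j Q. if res_gap n T1 j Q \<noteq> 0 then res_gap n T1 j Q else res_gap n T2 j Q)"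
  have loc: "E \<phi> j Q - E \<phi>' j Q = Dv j Q * (\<phi> j Q - \<phi>' j Q)"
    if "j < n" "Q \<in> multi_idx n" "2 \<le> mdeg n Q" "fixes_origin n \<phi>" "fixes_origin n \<phi>'"
      "\<forall>j'<n. \<forall>Q'\<in>multi_idx n. ((j',Q'),(j,Q)) \<in> idx_less n \<longrightarrow> \<phi> j' Q' = \<phi>' j' Q'" for \<phi> \<phi>' j Q
    using conj_defect_local[OF g1 T1(3) T1(2) that] conj_defect_local[OF g2 T2(3) T2(2) that]
    by (simp add: E_def Dv_def)
  obtain \<phi> where p: "fixes_origin n \<phi>" "tangent_to_id n \<phi>"
    and sol: "\<forall>j<n. \<forall>Q\<in>multi_idx n. 2 \<le> mdeg n Q \<longrightarrow> Dv j Q \<noteq> 0 \<longrightarrow> E \<phi> j Q = 0"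
    using rec_construct[of n E Dv] loc by blast
  have "\<forall>j<n. \<forall>Q\<in>multi_idx n. 2 \<le> mdeg n Q \<longrightarrow>
       (res_gap n T1 j Q \<noteq> 0 \<and> conj_defect n g1 \<phi> T1 j Q = 0) \<or>
       (res_gap n T2 j Q \<noteq> 0 \<and> conj_defect n g2 \<phi> T2 j Q = 0)"
    using sol nores by (auto simp: E_def Dv_def split: if_splits)
  then have "conj_defect n g1 \<phi> T1 j Q = 0 \<and> conj_defect n g2 \<phi> T2 j Q = 0"
    if "j < n" "Q \<in> multi_idx n" for j Q
    using conj_defects_vanish[OF g1 g2 p T1 T2 c12 _ that] by blast
  then show ?thesis using p by (auto simp: fmap_eq_def conj_defect_def)
qed

section \<open>Maps commuting with two non-resonant linear maps are linear\<close>

lemma commuting_nonlinear_coeff: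
  assumes h: "fixes_origin n h" and T: "T \<in> carrier_mat n n" "lower_tri n T"
    and c: "fmap_eq n (fcomp n h (linmap n T)) (fcomp n (linmap n T) h)"
    and j: "j < n" and Q: "Q \<in> multi_idx n" and d: "2 \<le> mdeg n Q"
    and z: "\<forall>j'<n. \<forall>Q'\<in>multi_idx n. ((j',Q'),(j,Q)) \<in> idx_less n \<longrightarrow>
              h j' Q' - linmap n (lin_part n h) j' Q' = 0"
  shows "res_gap n T j Q * (h j Q - linmap n (lin_part n h) j Q) = 0"
proof -
  define L where "L = lin_part n h"
  define N where "N = (\<lambda>m R. h m R - linmap n L m R)"
  have nu: "\<forall>m<n. Q \<noteq> unit_idx m" using not_unit_idx[OF d] .
  have left: "(\<Sum>m<n. T $$ (j,m) * N m Q) = fcomp n (linmap n T) h j Q"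
    using fcomp_linmap_left[OF h Q] nu by (simp add: N_def linmap_nonunit)
  have right: "fcomp n N (linmap n T) j Q = fcomp n h (linmap n T) j Q"
  proof -
    have "fcomp n N (linmap n T) j Q = fcomp n h (linmap n T) j Q - fcomp n (linmap n L) (linmap n T) j Q"
      unfolding fcomp_ps_subst N_def by (simp add: ps_subst_diff)
    moreover have "fcomp n (linmap n L) (linmap n T) j Q = linmap n (L * T) j Q"
      using linmap_comp[OF lin_part_carrier T(1)] j Q by (simp add: fmap_eq_def L_def)
    moreover have "linmap n (L * T) j Q = 0" using nu by (rule linmap_nonunit)
    ultimately show ?thesis by simp
  qed
  have "(\<Sum>m<n. T $$ (j,m) * N m Q) - fcomp n N (linmap n T) j Q = res_gap n T j Q * N j Q"
    by (rule homological_eq[OF T(2) j Q]) (use z in \<open>simp add: N_def L_def\<close>)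
  then show ?thesis using left right c j Q by (simp add: fmap_eq_def N_def L_def)
qed

text \<open>Hence a map commuting with T1 and T2 without common resonances is linear: along the
  recursion order each coefficient of its nonlinear part is killed by a nonzero factor.\<close>
lemma commuting_linear:
  assumes h: "fixes_origin n h"
    and T1: "T1 \<in> carrier_mat n n" "lower_tri n T1" and T2: "T2 \<in> carrier_mat n n" "lower_tri n T2"
    and nores: "\<forall>j<n. \<forall>Q\<in>multi_idx n. 2 \<le> mdeg n Q \<longrightarrow> res_gap n T1 j Q \<noteq> 0 \<or> res_gap n T2 j Q \<noteq> 0"
    and c1: "fmap_eq n (fcomp n h (linmap n T1)) (fcomp n (linmap n T1) h)"
    and c2: "fmap_eq n (fcomp n h (linmap n T2)) (fcomp n (linmap n T2) h)"
  shows "is_linear_map n h"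
proof -
  define L where "L = lin_part n h"
  have nonlinear_zero: "h j Q - linmap n L j Q = 0" if "j < n" "Q \<in> multi_idx n" for j Q
    using that
  proof (induction j Q rule: idx_less_induct)
    case (step j Q)
    show ?case
    proof (cases "mdeg n Q \<le> 1")
      case True
      then show ?thesis
        using low_degree_coeff_eq[OF h fixes_origin_linmap _ step(1,2)] lin_part_linmap[OF lin_part_carrier]
        by (simp add: L_def)
    next
      case False
      then have d: "2 \<le> mdeg n Q" by simp
      have "res_gap n T1 j Q * (h j Q - linmap n L j Q) = 0"
        using commuting_nonlinear_coeff[OF h T1 c1 step(1,2) d] step(3) by (auto simp: L_def)
      moreover have "res_gap n T2 j Q * (h j Q - linmap n L j Q) = 0"
        using commuting_nonlinear_coeff[OF h T2 c2 step(1,2) d] step(3) by (auto simp: L_def)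
      ultimately show ?thesis using nores step(1,2) d by auto
    qed
  qed
  show ?thesis
    unfolding is_linear_map_def
  proof (intro allI impI ballI)
    fix i Q assume i: "i < n" and Q: "Q \<in> multi_idx n" and d: "mdeg n Q \<noteq> 1"
    have "linmap n L i Q = 0" using d by (intro linmap_nonunit) (auto simp: mdeg_unit_idx)
    then show "h i Q = 0" using nonlinear_zero[OF i Q] by simp
  qed
qed

section \<open>Simultaneous linearization of a commuting family\<close>

lemma conj_mult:
  assumes a: "fixes_origin n a" and b: "fixes_origin n b" and p: "fixes_origin n \<phi>" and q: "fixes_origin n \<psi>"
    and inv: "fmap_eq n (fcomp n \<phi> \<psi>) fid"
  shows "fmap_eq n (fcomp n \<psi> (fcomp n (fcomp n a b) \<phi>))
                   (fcomp n (fcomp n \<psi> (fcomp n a \<phi>)) (fcomp n \<psi> (fcomp n b \<phi>)))"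
proof -
  have bp: "fixes_origin n (fcomp n b \<phi>)" using b by (rule fixes_origin_fcomp)
  have qbp: "fixes_origin n (fcomp n \<psi> (fcomp n b \<phi>))" using q by (rule fixes_origin_fcomp)
  have "fmap_eq n (fcomp n \<psi> (fcomp n (fcomp n a b) \<phi>)) (fcomp n \<psi> (fcomp n a (fcomp n b \<phi>)))"
    by (rule fcomp_cong2, rule fcomp_assoc[OF b p])
  also have "fmap_eq n \<dots> (fcomp n \<psi> (fcomp n a (fcomp n fid (fcomp n b \<phi>))))"
    by (rule fcomp_cong2, rule fcomp_cong2, rule fmap_eq_sym, rule fcomp_fid_left[OF bp])
  also have "fmap_eq n \<dots> (fcomp n \<psi> (fcomp n a (fcomp n (fcomp n \<phi> \<psi>) (fcomp n b \<phi>))))"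
    by (rule fcomp_cong2, rule fcomp_cong2, rule fcomp_cong1, rule fmap_eq_sym, rule inv)
  also have "fmap_eq n \<dots> (fcomp n \<psi> (fcomp n a (fcomp n \<phi> (fcomp n \<psi> (fcomp n b \<phi>)))))"
    by (rule fcomp_cong2, rule fcomp_cong2, rule fcomp_assoc[OF q bp])
  also have "fmap_eq n \<dots> (fcomp n \<psi> (fcomp n (fcomp n a \<phi>) (fcomp n \<psi> (fcomp n b \<phi>))))"
    by (rule fcomp_cong2, rule fmap_eq_sym, rule fcomp_assoc[OF p qbp])
  also have "fmap_eq n \<dots> (fcomp n (fcomp n \<psi> (fcomp n a \<phi>)) (fcomp n \<psi> (fcomp n b \<phi>)))"
    by (rule fmap_eq_sym, rule fcomp_assoc[OF fixes_origin_fcomp[OF a] qbp])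
  finally show ?thesis .
qed

lemma conj_commute:
  assumes a: "fixes_origin n a" and b: "fixes_origin n b" and p: "fixes_origin n \<phi>" and q: "fixes_origin n \<psi>"
    and inv: "fmap_eq n (fcomp n \<phi> \<psi>) fid" and c: "fmap_eq n (fcomp n a b) (fcomp n b a)"
  shows "fmap_eq n (fcomp n (fcomp n \<psi> (fcomp n a \<phi>)) (fcomp n \<psi> (fcomp n b \<phi>)))
                   (fcomp n (fcomp n \<psi> (fcomp n b \<phi>)) (fcomp n \<psi> (fcomp n a \<phi>)))"
proof -
  have "fmap_eq n (fcomp n (fcomp n \<psi> (fcomp n a \<phi>)) (fcomp n \<psi> (fcomp n b \<phi>)))
                  (fcomp n \<psi> (fcomp n (fcomp n a b) \<phi>))"
    by (rule fmap_eq_sym, rule conj_mult[OF a b p q inv])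
  also have "fmap_eq n \<dots> (fcomp n \<psi> (fcomp n (fcomp n b a) \<phi>))"
    by (rule fcomp_cong2, rule fcomp_cong1, rule c)
  also have "fmap_eq n \<dots> (fcomp n (fcomp n \<psi> (fcomp n b \<phi>)) (fcomp n \<psi> (fcomp n a \<phi>)))"
    by (rule conj_mult[OF b a p q inv])
  finally show ?thesis .
qed

lemma conj_to_linear:
  assumes p: "fixes_origin n \<phi>" and qp: "fmap_eq n (fcomp n \<psi> \<phi>) fid"
    and g: "fmap_eq n (fcomp n g \<phi>) (fcomp n \<phi> (linmap n T))"
  shows "fmap_eq n (fcomp n \<psi> (fcomp n g \<phi>)) (linmap n T)"
proof -
  have "fmap_eq n (fcomp n \<psi> (fcomp n g \<phi>)) (fcomp n \<psi> (fcomp n \<phi> (linmap n T)))"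
    by (rule fcomp_cong2[OF g])
  also have "fmap_eq n \<dots> (fcomp n (fcomp n \<psi> \<phi>) (linmap n T))"
    by (rule fmap_eq_sym, rule fcomp_assoc[OF p fixes_origin_linmap])
  also have "fmap_eq n \<dots> (fcomp n fid (linmap n T))" by (rule fcomp_cong1[OF qp])
  also have "fmap_eq n \<dots> (linmap n T)" by (rule fcomp_fid_left[OF fixes_origin_linmap])
  finally show ?thesis .
qed

text \<open>The map phi conjugating g1, g2 to T1, T2 turns every g_k into a map
  commuting with T1 and T2, hence a linear one.\<close>
lemma linearize_commuting_family:
  assumes K12: "1 \<in> K" "2 \<in> K"
    and fo: "\<forall>k\<in>K. fixes_origin n (g k)"
    and T1: "lower_tri n T1" "lin_part n (g 1) = T1"
    and T2: "lower_tri n T2" "lin_part n (g 2) = T2"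
    and no_res: "\<forall>j<n. Res n (\<lambda>i. T1 $$ (i,i)) j \<inter> Res n (\<lambda>i. T2 $$ (i,i)) j = {}"
    and c1: "\<forall>k\<in>K. fmap_eq n (fcomp n (g 1) (g k)) (fcomp n (g k) (g 1))"
    and c2: "\<forall>k\<in>K. fmap_eq n (fcomp n (g 2) (g k)) (fcomp n (g k) (g 2))"
  shows "simul_formally_linearizable n K g"
proof -
  have g1: "fixes_origin n (g 1)" and g2: "fixes_origin n (g 2)" using fo K12 by auto
  have T1c: "T1 \<in> carrier_mat n n" and T2c: "T2 \<in> carrier_mat n n"
    using T1(2) T2(2) lin_part_carrier by blast+
  have nores: "\<forall>j<n. \<forall>Q\<in>multi_idx n. 2 \<le> mdeg n Q \<longrightarrow> res_gap n T1 j Q \<noteq> 0 \<or> res_gap n T2 j Q \<noteq> 0"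
    using no_res res_gap_nonzero_if_no_common_resonance by blast
  obtain \<phi> where p: "fixes_origin n \<phi>" "tangent_to_id n \<phi>"
    and conj1: "fmap_eq n (fcomp n (g 1) \<phi>) (fcomp n \<phi> (linmap n T1))"
    and conj2: "fmap_eq n (fcomp n (g 2) \<phi>) (fcomp n \<phi> (linmap n T2))"
    using simultaneous_conjugation[OF g1 g2 T1c T1 T2c T2 _ nores] c1 K12 by blast
  obtain \<psi> where inv: "formal_inverse n \<phi> \<psi>" using inverse_exists[OF p] by blast
  then have q: "fixes_origin n \<psi>" and pq: "fmap_eq n (fcomp n \<phi> \<psi>) fid"
    and qp: "fmap_eq n (fcomp n \<psi> \<phi>) fid"
    by (auto simp: formal_inverse_def)
  define G where "G = (\<lambda>k. fcomp n \<psi> (fcomp n (g k) \<phi>))"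
  have G_fo: "fixes_origin n (G k)" for k unfolding G_def by (rule fixes_origin_fcomp[OF q])
  have G_comm_lin: "fmap_eq n (fcomp n (G k) (linmap n T)) (fcomp n (linmap n T) (G k))"
    if k: "k \<in> K" and l: "l \<in> K" and Gl: "fmap_eq n (G l) (linmap n T)"
      and c: "fmap_eq n (fcomp n (g l) (g k)) (fcomp n (g k) (g l))" for k l T
  proof -
    have "fmap_eq n (fcomp n (G k) (linmap n T)) (fcomp n (G k) (G l))"
      by (rule fcomp_cong2, rule fmap_eq_sym, rule Gl)
    also have "fmap_eq n \<dots> (fcomp n (G l) (G k))"
      unfolding G_def using fo k l by (intro conj_commute[OF _ _ p(1) q pq] fmap_eq_sym[OF c]) auto
    also have "fmap_eq n \<dots> (fcomp n (linmap n T) (G k))" by (rule fcomp_cong1[OF Gl])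
    finally show ?thesis .
  qed
  have G1: "fmap_eq n (G 1) (linmap n T1)" unfolding G_def by (rule conj_to_linear[OF p(1) qp conj1])
  have G2: "fmap_eq n (G 2) (linmap n T2)" unfolding G_def by (rule conj_to_linear[OF p(1) qp conj2])
  have "is_linear_map n (G k)" if k: "k \<in> K" for k
    using commuting_linear[OF G_fo T1c T1(1) T2c T2(1) nores G_comm_lin[OF k K12(1) G1] G_comm_lin[OF k K12(2) G2]]
      c1 c2 k by blast
  then show ?thesis using p(1) inv unfolding simul_formally_linearizable_def G_def by blast
qed

lemma fcomp_cancel_middle:
  assumes q: "fixes_origin n \<psi>" and w: "fixes_origin n W" and inv: "fmap_eq n (fcomp n \<phi> \<psi>) fid"
  shows "fmap_eq n (fcomp n X (fcomp n \<phi> (fcomp n \<psi> W))) (fcomp n X W)"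
proof (rule fcomp_cong2)
  have "fmap_eq n (fcomp n \<phi> (fcomp n \<psi> W)) (fcomp n (fcomp n \<phi> \<psi>) W)"
    by (rule fmap_eq_sym, rule fcomp_assoc[OF q w])
  also have "fmap_eq n \<dots> (fcomp n fid W)" by (rule fcomp_cong1[OF inv])
  also have "fmap_eq n \<dots> W" by (rule fcomp_fid_left[OF w])
  finally show "fmap_eq n (fcomp n \<phi> (fcomp n \<psi> W)) W" .
qed

lemma formal_inverse_fcomp:
  assumes p1: "fixes_origin n \<phi>1" and i1: "formal_inverse n \<phi>1 \<psi>1"
    and p2: "fixes_origin n \<phi>2" and i2: "formal_inverse n \<phi>2 \<psi>2"
  shows "formal_inverse n (fcomp n \<phi>1 \<phi>2) (fcomp n \<psi>2 \<psi>1)"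
proof -
  have q1: "fixes_origin n \<psi>1" and q2: "fixes_origin n \<psi>2"
    using i1 i2 by (auto simp: formal_inverse_def)
  have "fmap_eq n (fcomp n (fcomp n \<phi>1 \<phi>2) (fcomp n \<psi>2 \<psi>1)) (fcomp n \<phi>1 (fcomp n \<phi>2 (fcomp n \<psi>2 \<psi>1)))"
    by (rule fcomp_assoc[OF p2 fixes_origin_fcomp[OF q2]])
  also have "fmap_eq n \<dots> (fcomp n \<phi>1 \<psi>1)"
    using i2 by (intro fcomp_cancel_middle[OF q2 q1]) (simp add: formal_inverse_def)
  also have "fmap_eq n \<dots> fid" using i1 by (simp add: formal_inverse_def)
  finally have right: "fmap_eq n (fcomp n (fcomp n \<phi>1 \<phi>2) (fcomp n \<psi>2 \<psi>1)) fid" .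
  have "fmap_eq n (fcomp n (fcomp n \<psi>2 \<psi>1) (fcomp n \<phi>1 \<phi>2)) (fcomp n \<psi>2 (fcomp n \<psi>1 (fcomp n \<phi>1 \<phi>2)))"
    by (rule fcomp_assoc[OF q1 fixes_origin_fcomp[OF p1]])
  also have "fmap_eq n \<dots> (fcomp n \<psi>2 \<phi>2)"
    using i1 by (intro fcomp_cancel_middle[OF p1 p2]) (simp add: formal_inverse_def)
  also have "fmap_eq n \<dots> fid" using i2 by (simp add: formal_inverse_def)
  finally have left: "fmap_eq n (fcomp n (fcomp n \<psi>2 \<psi>1) (fcomp n \<phi>1 \<phi>2)) fid" .
  show ?thesis using right left fixes_origin_fcomp[OF q2] by (simp add: formal_inverse_def)
qed

lemma formal_inverse_linmap:
  assumes A: "A \<in> carrier_mat n n" and B: "B \<in> carrier_mat n n" and "A * B = 1\<^sub>m n" "B * A = 1\<^sub>m n"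
  shows "formal_inverse n (linmap n A) (linmap n B)"
  using linmap_inverse[OF A B] linmap_inverse[OF B A] assms(3,4)
  by (simp add: formal_inverse_def fixes_origin_linmap)

lemma lin_part_linear_conj:
  assumes f: "fixes_origin n f" and A: "A \<in> carrier_mat n n" and B: "B \<in> carrier_mat n n"
  shows "lin_part n (fcomp n (linmap n B) (fcomp n f (linmap n A))) = B * lin_part n f * A"
proof -
  have "lin_part n (fcomp n (linmap n B) (fcomp n f (linmap n A))) = B * (lin_part n f * A)"
    using lin_part_fcomp[OF fixes_origin_fcomp[OF f]] lin_part_fcomp[OF fixes_origin_linmap]
      lin_part_linmap[OF A] lin_part_linmap[OF B]
    by simp
  then show ?thesis using assoc_mult_mat[OF B lin_part_carrier A] by simp
qed

text \<open>Simultaneous linearizability does not depend on the linear coordinates: a linearizing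
  pair (phi, psi) for the family B f_k A yields the pair (A phi, psi B) for the f_k.\<close>
lemma simul_linearizable_linear_change:
  assumes A: "A \<in> carrier_mat n n" and B: "B \<in> carrier_mat n n"
    and AB: "A * B = 1\<^sub>m n" and BA: "B * A = 1\<^sub>m n"
    and fo: "\<forall>k\<in>K. fixes_origin n (f k)"
    and lin: "simul_formally_linearizable n K (\<lambda>k. fcomp n (linmap n B) (fcomp n (f k) (linmap n A)))"
  shows "simul_formally_linearizable n K f"
proof -
  let ?A = "linmap n A" and ?B = "linmap n B"
  obtain \<phi> \<psi> where p: "fixes_origin n \<phi>" and inv: "formal_inverse n \<phi> \<psi>"
    and lin_k: "\<forall>k\<in>K. is_linear_map n (fcomp n \<psi> (fcomp n (fcomp n ?B (fcomp n (f k) ?A)) \<phi>))"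
    using lin by (auto simp: simul_formally_linearizable_def)
  have inv': "formal_inverse n (fcomp n ?A \<phi>) (fcomp n \<psi> ?B)"
    by (rule formal_inverse_fcomp[OF fixes_origin_linmap formal_inverse_linmap[OF A B AB BA] p inv])
  have "fmap_eq n (fcomp n (fcomp n \<psi> ?B) (fcomp n (f k) (fcomp n ?A \<phi>)))
                  (fcomp n \<psi> (fcomp n (fcomp n ?B (fcomp n (f k) ?A)) \<phi>))" if k: "k \<in> K" for k
  proof -
    have fk: "fixes_origin n (f k)" using fo k by auto
    have "fmap_eq n (fcomp n (fcomp n \<psi> ?B) (fcomp n (f k) (fcomp n ?A \<phi>)))
                    (fcomp n \<psi> (fcomp n ?B (fcomp n (f k) (fcomp n ?A \<phi>))))"
      by (rule fcomp_assoc[OF fixes_origin_linmap fixes_origin_fcomp[OF fk]])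
    also have "fmap_eq n \<dots> (fcomp n \<psi> (fcomp n ?B (fcomp n (fcomp n (f k) ?A) \<phi>)))"
      by (rule fcomp_cong2, rule fcomp_cong2, rule fmap_eq_sym, rule fcomp_assoc[OF fixes_origin_linmap p])
    also have "fmap_eq n \<dots> (fcomp n \<psi> (fcomp n (fcomp n ?B (fcomp n (f k) ?A)) \<phi>))"
      by (rule fcomp_cong2, rule fmap_eq_sym, rule fcomp_assoc[OF fixes_origin_fcomp[OF fk] p])
    finally show ?thesis .
  qed
  then have "\<forall>k\<in>K. is_linear_map n (fcomp n (fcomp n \<psi> ?B) (fcomp n (f k) (fcomp n ?A \<phi>)))"
    using lin_k is_linear_map_cong by blast
  then show ?thesis
    using inv' fixes_origin_fcomp[OF fixes_origin_linmap] unfolding simul_formally_linearizable_def by blast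
qed

text \<open>In the basis A the linear parts of f1, f2 become the lower triangular matrices
  T_i = B Df_i A; conjugating every f_k by A reduces the claim to the triangular case.\<close>
theorem corollary2p7:
  fixes n h :: nat and f :: "nat \<Rightarrow> fmap"
  assumes "h \<ge> 2"
    and "\<forall>k\<in>{1..h}. biholo_germ n (f k)"
    and "\<exists>A B. almost_simul_jordan_basis n (lin_part n (f 1)) (lin_part n (f 2)) A B \<and>
           (\<forall>j<n. Res n (\<lambda>i. (B * lin_part n (f 1) * A) $$ (i,i)) j \<inter>
                  Res n (\<lambda>i. (B * lin_part n (f 2) * A) $$ (i,i)) j = {})"
    and "\<forall>k\<in>{1..h}. fmap_eq n (fcomp n (f 1) (f k)) (fcomp n (f k) (f 1))"
    and "\<forall>k\<in>{1..h}. fmap_eq n (fcomp n (f 2) (f k)) (fcomp n (f k) (f 2))"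
  shows "simul_formally_linearizable n {1..h} f"
proof -
  obtain A B where basis: "almost_simul_jordan_basis n (lin_part n (f 1)) (lin_part n (f 2)) A B"
    and nr: "\<forall>j<n. Res n (\<lambda>i. (B * lin_part n (f 1) * A) $$ (i,i)) j \<inter>
                  Res n (\<lambda>i. (B * lin_part n (f 2) * A) $$ (i,i)) j = {}"
    using assms(3) by blast
  have A: "A \<in> carrier_mat n n" and B: "B \<in> carrier_mat n n" and AB: "A * B = 1\<^sub>m n" and BA: "B * A = 1\<^sub>m n"
    and tri: "lower_tri n (B * lin_part n (f 1) * A)" "lower_tri n (B * lin_part n (f 2) * A)"
    using basis by (auto simp: almost_simul_jordan_basis_def lower_tri_ajf)
  have K12: "1 \<in> {1..h}" "2 \<in> {1..h}" using assms(1) by auto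
  have fo: "\<forall>k\<in>{1..h}. fixes_origin n (f k)" using assms(2) by (auto simp: biholo_germ_def)
  define g where "g = (\<lambda>k. fcomp n (linmap n B) (fcomp n (f k) (linmap n A)))"
  have g_comm: "fmap_eq n (fcomp n (g l) (g k)) (fcomp n (g k) (g l))"
    if "k \<in> {1..h}" "l \<in> {1..h}" "fmap_eq n (fcomp n (f l) (f k)) (fcomp n (f k) (f l))" for k l
    unfolding g_def using that fo formal_inverse_linmap[OF A B AB BA]
    by (intro conj_commute) (auto simp: formal_inverse_def fixes_origin_linmap)
  have "simul_formally_linearizable n {1..h} g"
  proof (rule linearize_commuting_family[where g = g, OF K12 _ tri(1) _ tri(2) _ nr])
    show "\<forall>k\<in>{1..h}. fixes_origin n (g k)" by (simp add: g_def fixes_origin_fcomp fixes_origin_linmap)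
    show "lin_part n (g 1) = B * lin_part n (f 1) * A" "lin_part n (g 2) = B * lin_part n (f 2) * A"
      using lin_part_linear_conj[OF _ A B] fo K12 by (auto simp: g_def)
  qed (use g_comm assms(4,5) K12 in auto)
  then show ?thesis by (rule simul_linearizable_linear_change[OF A B AB BA fo, folded g_def])
qed

end
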